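(* Fix $1<p<\infty$. Let $X$ and $Y$ be Banach spaces such that $X$ has the approximation property, $\mathcal A(X,Y)\subsetneq\mathcal K(X,Y)$, and $\big(\bigoplus_{n=1}^\infty X\big)_{\ell^p}$ is linearly isomorphic to $X$. Let $Z_p:=\big(\bigoplus_{j=0}^\infty X_j\big)_{\ell^p}$ with $X_0=Y$ and $X_j=X$ for $j\ge1$, and for $\emptyset\neq A\subsetneq\mathbb N$ let \[ \mathcal I_A:=\{S\in\mathcal K(Z_p): P_0SJ_0\in\mathcal A(Y),\ P_0SJ_k\in\mathcal A(X,Y)\text{ for all }k\in A\}. \] Then $\mathcal I_A$ and $\mathcal I_B$ are isomorphic as Banach algebras for all $\emptyset\neq A,B\subsetneq\mathbb N$.
   Context: $\mathbb N=\{1,2,3,\ldots\}$. For Banach spaces $E,F$, $\mathcal K(E,F)$ denotes the compact operators $E\to F$ and $\mathcal A(E,F)$ the approximable operators, i.e. the operator-norm closure of the bounded finite-rank operators $E\to F$; $\mathcal A(E)=\mathcal A(E,E)$, $\mathcal K(E)=\mathcal K(E,E)$. For $m,n\ge0$, $P_m:Z_p\to X_m$ and $J_n:X_n\to Z_p$ denote the natural coordinate projections and inclusions of the $\ell^p$-direct sum. A Banach algebra isomorphism is a bijective bounded algebra homomorphism (with bounded inverse). *)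

theory Defs
  imports "HOL-Analysis.Analysis"
begin

definition finite_rank :: "('a::real_normed_vector \<Rightarrow> 'b::real_normed_vector) \<Rightarrow> bool" where
  "finite_rank F \<longleftrightarrow> (\<exists>B. finite B \<and> range F \<subseteq> span B)"

definition approximable :: "('a::real_normed_vector \<Rightarrow> 'b::real_normed_vector) \<Rightarrow> bool" where
  "approximable T \<longleftrightarrow> bounded_linear T \<and>
     (\<forall>e>0. \<exists>F. bounded_linear F \<and> finite_rank F \<and> onorm (\<lambda>x. T x - F x) < e)"

definition compact_op :: "('a::real_normed_vector \<Rightarrow> 'b::real_normed_vector) \<Rightarrow> bool" where
  "compact_op T \<longleftrightarrow> bounded_linear T \<and> compact (closure (T ` cball 0 1))"

definition approximation_property :: "'a::real_normed_vector itself \<Rightarrow> bool" where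
  "approximation_property _ \<longleftrightarrow>
     (\<forall>K::'a set. compact K \<longrightarrow> (\<forall>e>0. \<exists>F::'a \<Rightarrow> 'a. bounded_linear F \<and> finite_rank F \<and>
        (\<forall>x\<in>K. norm (F x - x) < e)))"

definition lp_seq :: "real \<Rightarrow> (nat \<Rightarrow> 'a::real_normed_vector) set" where
  "lp_seq p = {f. summable (\<lambda>n. norm (f n) powr p)}"

definition lp_norm :: "real \<Rightarrow> (nat \<Rightarrow> 'a::real_normed_vector) \<Rightarrow> real" where
  "lp_norm p f = (\<Sum>n. norm (f n) powr p) powr (1/p)"

definition lp_sum_iso :: "real \<Rightarrow> 'a::real_normed_vector itself \<Rightarrow> bool" where
  "lp_sum_iso p _ \<longleftrightarrow> (\<exists>T :: (nat \<Rightarrow> 'a) \<Rightarrow> 'a.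
      bij_betw T (lp_seq p) UNIV \<and>
      (\<forall>f\<in>lp_seq p. \<forall>g\<in>lp_seq p. T (\<lambda>n. f n + g n) = T f + T g) \<and>
      (\<forall>c. \<forall>f\<in>lp_seq p. T (\<lambda>n. c *\<^sub>R f n) = c *\<^sub>R T f) \<and>
      (\<exists>c C. 0 < c \<and> 0 < C \<and>
         (\<forall>f\<in>lp_seq p. c * lp_norm p f \<le> norm (T f) \<and> norm (T f) \<le> C * lp_norm p f)))"

text \<open>An element of Z_p is a pair (y, f): y is the coordinate in X_0 = Y and f j
  (j >= 1) the coordinate in X_j = X; the dummy value f 0 is required to be 0.\<close>
type_synonym ('a, 'b) zpt = "'b \<times> (nat \<Rightarrow> 'a)"

definition Zp :: "real \<Rightarrow> ('a::real_normed_vector, 'b::real_normed_vector) zpt set" where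
  "Zp p = {(y, f). f 0 = 0 \<and> summable (\<lambda>n. norm (f n) powr p)}"

definition znorm :: "real \<Rightarrow> ('a::real_normed_vector, 'b::real_normed_vector) zpt \<Rightarrow> real" where
  "znorm p z = (norm (fst z) powr p + (\<Sum>n. norm (snd z n) powr p)) powr (1/p)"

definition zzero :: "('a::real_normed_vector, 'b::real_normed_vector) zpt" where
  "zzero = (0, \<lambda>_. 0)"

definition zadd :: "('a::real_normed_vector, 'b::real_normed_vector) zpt \<Rightarrow> ('a, 'b) zpt \<Rightarrow> ('a, 'b) zpt" where
  "zadd z w = (fst z + fst w, \<lambda>n. snd z n + snd w n)"

definition zscale :: "real \<Rightarrow> ('a::real_normed_vector, 'b::real_normed_vector) zpt \<Rightarrow> ('a, 'b) zpt" where
  "zscale c z = (c *\<^sub>R fst z, \<lambda>n. c *\<^sub>R snd z n)"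

definition zsub :: "('a::real_normed_vector, 'b::real_normed_vector) zpt \<Rightarrow> ('a, 'b) zpt \<Rightarrow> ('a, 'b) zpt" where
  "zsub z w = zadd z (zscale (-1) w)"

definition zoperator :: "real \<Rightarrow> (('a::real_normed_vector, 'b::real_normed_vector) zpt \<Rightarrow> ('a, 'b) zpt) \<Rightarrow> bool" where
  "zoperator p S \<longleftrightarrow>
     (\<forall>z\<in>Zp p. S z \<in> Zp p) \<and> (\<forall>z. z \<notin> Zp p \<longrightarrow> S z = zzero) \<and>
     (\<forall>z\<in>Zp p. \<forall>w\<in>Zp p. S (zadd z w) = zadd (S z) (S w)) \<and>
     (\<forall>c. \<forall>z\<in>Zp p. S (zscale c z) = zscale c (S z)) \<and>
     (\<exists>K. \<forall>z\<in>Zp p. znorm p (S z) \<le> K * znorm p z)"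

definition zcompact_op :: "real \<Rightarrow> (('a::real_normed_vector, 'b::real_normed_vector) zpt \<Rightarrow> ('a, 'b) zpt) \<Rightarrow> bool" where
  "zcompact_op p S \<longleftrightarrow> zoperator p S \<and>
     (\<forall>x::nat \<Rightarrow> ('a,'b) zpt. (\<forall>n. x n \<in> Zp p \<and> znorm p (x n) \<le> 1) \<longrightarrow>
        (\<exists>(r::nat \<Rightarrow> nat) w. strict_mono r \<and> w \<in> Zp p \<and> (\<lambda>n. znorm p (zsub (S (x (r n))) w)) \<longlonglongrightarrow> 0))"

definition zopnorm :: "real \<Rightarrow> (('a::real_normed_vector, 'b::real_normed_vector) zpt \<Rightarrow> ('a, 'b) zpt) \<Rightarrow> real" where
  "zopnorm p S = Sup {znorm p (S z) | z. z \<in> Zp p \<and> znorm p z \<le> 1}"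

definition P0SJ0 :: "(('a::real_normed_vector, 'b::real_normed_vector) zpt \<Rightarrow> ('a, 'b) zpt) \<Rightarrow> 'b \<Rightarrow> 'b" where
  "P0SJ0 S = (\<lambda>y. fst (S (y, \<lambda>_. 0)))"

definition P0SJk :: "(('a::real_normed_vector, 'b::real_normed_vector) zpt \<Rightarrow> ('a, 'b) zpt) \<Rightarrow> nat \<Rightarrow> 'a \<Rightarrow> 'b" where
  "P0SJk S k = (\<lambda>x. fst (S (0, (\<lambda>_. 0)(k := x))))"

definition IA :: "real \<Rightarrow> nat set \<Rightarrow> (('a::real_normed_vector, 'b::real_normed_vector) zpt \<Rightarrow> ('a, 'b) zpt) set" where
  "IA p A = {S. zcompact_op p S \<and> approximable (P0SJ0 S) \<and> (\<forall>k\<in>A. approximable (P0SJk S k))}"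

definition banach_alg_iso :: "real \<Rightarrow>
    ((('a::real_normed_vector, 'b::real_normed_vector) zpt \<Rightarrow> ('a, 'b) zpt) \<Rightarrow> (('a, 'b) zpt \<Rightarrow> ('a, 'b) zpt)) \<Rightarrow>
    (('a, 'b) zpt \<Rightarrow> ('a, 'b) zpt) set \<Rightarrow> (('a, 'b) zpt \<Rightarrow> ('a, 'b) zpt) set \<Rightarrow> bool" where
  "banach_alg_iso p \<Phi> I J \<longleftrightarrow> bij_betw \<Phi> I J \<and>
     (\<forall>S\<in>I. \<forall>T\<in>I. \<Phi> (\<lambda>z. zadd (S z) (T z)) = (\<lambda>z. zadd (\<Phi> S z) (\<Phi> T z))) \<and>
     (\<forall>c. \<forall>S\<in>I. \<Phi> (\<lambda>z. zscale c (S z)) = (\<lambda>z. zscale c (\<Phi> S z))) \<and>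
     (\<forall>S\<in>I. \<forall>T\<in>I. \<Phi> (S \<circ> T) = \<Phi> S \<circ> \<Phi> T) \<and>
     (\<exists>C. \<forall>S\<in>I. zopnorm p (\<Phi> S) \<le> C * zopnorm p S) \<and>
     (\<exists>c>0. \<forall>S\<in>I. c * zopnorm p S \<le> zopnorm p (\<Phi> S))"

end

theory Submission
  imports Defs
begin

text \<open>Since X is isomorphic to the l^p-sum of countably many copies of itself, the X-part of Z_p is
  an l^p-sum of copies of X indexed by N \<times> N, the row j being X_j. A bijection of N \<times> N that fixes
  row 0, maps the rows in B onto the rows in A and the rows outside B onto those outside A induces
  an invertible operator U on Z_p which is the identity on Y and carries vectors supported in
  the coordinates A to vectors supported in B. Conjugation S \<mapsto> U S U^-1 is a Banach algebra
  automorphism of the bounded operators preserving compactness, and P_0 (U S U^-1) J_k = P_0 S U^-1 J_k.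
  For k \<in> B the operator U^-1 J_k lands in the coordinates A, and because S is compact and p > 1,
  P_0 S is uniformly small on the far coordinates; so P_0 S U^-1 J_k is a norm limit of finite sums
  of the approximable operators P_0 S J_j (\<dots>), j \<in> A. Hence conjugation maps I_A onto I_B.\<close>

section \<open>Approximable operators\<close>

lemma finite_rank_comp: "finite_rank F \<Longrightarrow> finite_rank (\<lambda>x. F (L x))"
  unfolding finite_rank_def by blast

lemma finite_rank_add:
  assumes "finite_rank F" "finite_rank G"
  shows "finite_rank (\<lambda>x. F x + G x)"
proof -
  obtain B1 B2 where B: "finite B1" "range F \<subseteq> span B1" "finite B2" "range G \<subseteq> span B2"
    using assms unfolding finite_rank_def by blast
  have "range (\<lambda>x. F x + G x) \<subseteq> span (B1 \<union> B2)"
    using B span_mono[of B1 "B1 \<union> B2"] span_mono[of B2 "B1 \<union> B2"] by (auto intro!: span_add)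
  then show ?thesis
    unfolding finite_rank_def using B by blast
qed

lemma approximable_zero: "approximable (\<lambda>x::'a::real_normed_vector. 0::'b::real_normed_vector)"
  unfolding approximable_def finite_rank_def
  by (auto intro!: exI[of _ "\<lambda>x. 0"] exI[of _ "{}"] simp: onorm_zero)

lemma approximable_bounded_linear: "approximable T \<Longrightarrow> bounded_linear T"
  by (simp add: approximable_def)

lemma approximable_comp:
  assumes T: "approximable T" and L: "bounded_linear L"
  shows "approximable (\<lambda>x. T (L x))"
proof -
  have "\<exists>F. bounded_linear F \<and> finite_rank F \<and> onorm (\<lambda>x. T (L x) - F x) < e" if "e > 0" for e
  proof -
    have L0: "onorm L \<ge> 0"
      using onorm_pos_le[OF L] .
    obtain F where F: "bounded_linear F" "finite_rank F" "onorm (\<lambda>x. T x - F x) < e / (onorm L + 1)"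
      using T \<open>e > 0\<close> L0 unfolding approximable_def by (meson add_nonneg_pos divide_pos_pos zero_less_one)
    have "onorm ((\<lambda>x. T x - F x) \<circ> L) \<le> onorm (\<lambda>x. T x - F x) * onorm L"
      using approximable_bounded_linear[OF T] F(1) L by (intro onorm_compose bounded_linear_sub)
    also have "\<dots> \<le> e / (onorm L + 1) * onorm L"
      using mult_right_mono[OF less_imp_le[OF F(3)] L0] .
    also have "\<dots> < e"
      using \<open>e > 0\<close> L0 by (simp add: field_simps)
    finally show ?thesis
      using bounded_linear_compose[OF F(1) L] finite_rank_comp[OF F(2)] by (auto simp: o_def)
  qed
  then show ?thesis
    unfolding approximable_def
    using bounded_linear_compose[OF approximable_bounded_linear[OF T] L] by (simp add: o_def)
qed

lemma approximable_add:
  assumes S: "approximable S" and T: "approximable T"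
  shows "approximable (\<lambda>x. S x + T x)"
proof -
  have "\<exists>H. bounded_linear H \<and> finite_rank H \<and> onorm (\<lambda>x. (S x + T x) - H x) < e" if "e > 0" for e
  proof -
    obtain F G where F: "bounded_linear F" "finite_rank F" "onorm (\<lambda>x. S x - F x) < e/2"
      and G: "bounded_linear G" "finite_rank G" "onorm (\<lambda>x. T x - G x) < e/2"
      using S T \<open>e > 0\<close> unfolding approximable_def by (meson half_gt_zero)
    have "onorm (\<lambda>x. (S x - F x) + (T x - G x)) < e"
      using approximable_bounded_linear[OF S] approximable_bounded_linear[OF T] F G
      by (intro onorm_triangle_lt bounded_linear_sub) auto
    then show ?thesis
      using bounded_linear_add[OF F(1) G(1)] finite_rank_add[OF F(2) G(2)]
      by (auto simp: algebra_simps)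
  qed
  then show ?thesis
    unfolding approximable_def
    using approximable_bounded_linear[OF S] approximable_bounded_linear[OF T]
    by (blast intro: bounded_linear_add)
qed

lemma approximable_sum:
  "finite J \<Longrightarrow> (\<And>j. j \<in> J \<Longrightarrow> approximable (F j)) \<Longrightarrow> approximable (\<lambda>x. \<Sum>j\<in>J. F j x)"
  by (induction J rule: finite_induct) (auto simp: approximable_zero intro: approximable_add)

lemma approximable_closed:
  assumes T: "bounded_linear T"
    and approx: "\<And>e. e > 0 \<Longrightarrow> \<exists>G. approximable G \<and> onorm (\<lambda>x. T x - G x) < e"
  shows "approximable T"
proof -
  have "\<exists>F. bounded_linear F \<and> finite_rank F \<and> onorm (\<lambda>x. T x - F x) < e" if "e > 0" for e
  proof -
    obtain G where G: "approximable G" "onorm (\<lambda>x. T x - G x) < e/2"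
      using approx \<open>e > 0\<close> by (meson half_gt_zero)
    obtain F where F: "bounded_linear F" "finite_rank F" "onorm (\<lambda>x. G x - F x) < e/2"
      using G(1) \<open>e > 0\<close> unfolding approximable_def by (meson half_gt_zero)
    have "onorm (\<lambda>x. (T x - G x) + (G x - F x)) < e"
      using T approximable_bounded_linear[OF G(1)] F G(2)
      by (intro onorm_triangle_lt bounded_linear_sub) auto
    then show ?thesis
      using F by auto
  qed
  then show ?thesis
    unfolding approximable_def using T by blast
qed

section \<open>The space Z_p\<close>

lemma powr_add_le_two_powr:
  fixes a b p :: real
  assumes "a \<ge> 0" "b \<ge> 0" "p > 0"
  shows "(a + b) powr p \<le> 2 powr p * (a powr p + b powr p)"
proof -
  have "(a + b) powr p \<le> (2 * max a b) powr p"
    using assms by (intro powr_mono2) auto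
  also have "\<dots> = 2 powr p * max a b powr p"
    using assms by (simp add: powr_mult)
  also have "max a b powr p \<le> a powr p + b powr p"
    by (simp add: max_def)
  finally show ?thesis
    by simp
qed

lemma summable_norm_powr_add:
  fixes f g :: "nat \<Rightarrow> 'a::real_normed_vector"
  assumes "summable (\<lambda>n. norm (f n) powr p)" "summable (\<lambda>n. norm (g n) powr p)" "p > 0"
  shows "summable (\<lambda>n. norm (f n + g n) powr p)"
proof (rule summable_comparison_test')
  show "summable (\<lambda>n. 2 powr p * (norm (f n) powr p + norm (g n) powr p))"
    using assms by (intro summable_mult summable_add)
  have "norm (f n + g n) powr p \<le> (norm (f n) + norm (g n)) powr p" for n
    using assms(3) by (intro powr_mono2) (auto simp: norm_triangle_ineq)
  then show "norm (norm (f n + g n) powr p) \<le> 2 powr p * (norm (f n) powr p + norm (g n) powr p)" for n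
    using order_trans[OF _ powr_add_le_two_powr[of "norm (f n)" "norm (g n)" p]] assms(3) by simp
qed

lemma summable_norm_powr_scaleR:
  fixes f :: "nat \<Rightarrow> 'a::real_normed_vector"
  assumes "summable (\<lambda>n. norm (f n) powr p)"
  shows "summable (\<lambda>n. norm (c *\<^sub>R f n) powr p)"
  using summable_mult[OF assms, of "\<bar>c\<bar> powr p"] by (simp add: powr_mult)

lemma norm_powr_single_eq:
  "(\<lambda>n. norm (((\<lambda>_. 0::'a::real_normed_vector)(k := x)) n) powr p) = (\<lambda>n. if n = k then norm x powr p else 0)"
  by auto

lemma summable_norm_powr_single:
  "summable (\<lambda>n. norm (((\<lambda>_. 0::'a::real_normed_vector)(k := x)) n) powr p)"
  unfolding norm_powr_single_eq by (rule summable_single)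

lemma suminf_norm_powr_single:
  "(\<Sum>n. norm (((\<lambda>_. 0::'a::real_normed_vector)(k := x)) n) powr p) = norm x powr p"
  unfolding norm_powr_single_eq using sums_single[of k "\<lambda>_. norm x powr p"] by (simp add: sums_iff)

lemma suminf_norm_powr_nonneg: "summable (\<lambda>n. norm (f n) powr p) \<Longrightarrow> (\<Sum>n. norm (f n) powr p) \<ge> 0"
  by (simp add: suminf_nonneg)

lemma Zp_iff: "z \<in> Zp p \<longleftrightarrow> snd z 0 = 0 \<and> summable (\<lambda>n. norm (snd z n) powr p)"
  by (cases z) (simp add: Zp_def)

lemma fst_zadd [simp]: "fst (zadd z w) = fst z + fst w"
  and snd_zadd [simp]: "snd (zadd z w) = (\<lambda>n. snd z n + snd w n)"
  and fst_zscale [simp]: "fst (zscale c z) = c *\<^sub>R fst z"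
  and snd_zscale [simp]: "snd (zscale c z) = (\<lambda>n. c *\<^sub>R snd z n)"
  and fst_zsub [simp]: "fst (zsub z w) = fst z - fst w"
  and snd_zsub [simp]: "snd (zsub z w) = (\<lambda>n. snd z n - snd w n)"
  by (simp_all add: zadd_def zscale_def zsub_def)

lemma zscale_zero [simp]: "zscale 0 z = zzero"
  by (simp add: zscale_def zzero_def)

lemma zscale_zsub: "zscale c (zsub z w) = zsub (zscale c z) (zscale c w)"
  by (simp add: prod_eq_iff algebra_simps)

lemma zzero_in_Zp [simp]: "zzero \<in> Zp p"
  by (simp add: Zp_iff zzero_def)

lemma Pair_zero_in_Zp [simp]: "(y, \<lambda>_. 0) \<in> Zp p"
  by (simp add: Zp_def)

lemma single_in_Zp: "k \<noteq> 0 \<Longrightarrow> (y, (\<lambda>_. 0)(k := x)) \<in> Zp p"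
  using summable_norm_powr_single[of k x p] by (simp add: Zp_def)

lemma zadd_in_Zp: "z \<in> Zp p \<Longrightarrow> w \<in> Zp p \<Longrightarrow> p > 0 \<Longrightarrow> zadd z w \<in> Zp p"
  by (simp add: Zp_iff summable_norm_powr_add)

lemma zscale_in_Zp: "z \<in> Zp p \<Longrightarrow> zscale c z \<in> Zp p"
  using summable_norm_powr_scaleR[of "snd z" p c] by (simp add: Zp_iff del: norm_scaleR)

lemma zsub_in_Zp: "z \<in> Zp p \<Longrightarrow> w \<in> Zp p \<Longrightarrow> p > 0 \<Longrightarrow> zsub z w \<in> Zp p"
  by (simp add: zsub_def zadd_in_Zp zscale_in_Zp)

lemma Zp_dominated:
  assumes "w \<in> Zp p" "snd z 0 = 0" "\<And>j. norm (snd z j) \<le> norm (snd w j)" "p > 0"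
  shows "z \<in> Zp p"
proof -
  have sw: "summable (\<lambda>n. norm (snd w n) powr p)"
    using assms Zp_iff by blast
  have "summable (\<lambda>n. norm (snd z n) powr p)"
    by (rule summable_comparison_test'[OF sw]) (use assms in \<open>auto intro: powr_mono2\<close>)
  then show ?thesis
    using assms Zp_iff by blast
qed

lemma znorm_nonneg: "znorm p z \<ge> 0"
  by (simp add: znorm_def)

lemma znorm_zzero [simp]: "znorm p zzero = 0"
  by (simp add: znorm_def zzero_def)

lemma znorm_single: "p > 0 \<Longrightarrow> znorm p (0::'b::real_normed_vector, (\<lambda>_. 0)(k := x)) = norm x"
  using suminf_norm_powr_single[of k x p] by (simp add: znorm_def powr_powr)

lemma znorm_powr: "z \<in> Zp p \<Longrightarrow> p > 0 \<Longrightarrow> znorm p z powr p = norm (fst z) powr p + (\<Sum>n. norm (snd z n) powr p)"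
  by (simp add: znorm_def powr_powr add_nonneg_nonneg suminf_norm_powr_nonneg Zp_iff)

lemma norm_fst_le_znorm:
  assumes "z \<in> Zp p" "p > 0"
  shows "norm (fst z) \<le> znorm p z"
proof -
  have "norm (fst z) = (norm (fst z) powr p) powr (1/p)"
    using assms by (simp add: powr_powr)
  also have "\<dots> \<le> znorm p z"
    unfolding znorm_def using assms
    by (intro powr_mono2) (auto simp: Zp_iff suminf_norm_powr_nonneg)
  finally show ?thesis .
qed

lemma norm_snd_le_znorm:
  assumes "z \<in> Zp p" "p > 0"
  shows "norm (snd z j) \<le> znorm p z"
proof -
  have summ: "summable (\<lambda>n. norm (snd z n) powr p)"
    using assms Zp_iff by blast
  have "norm (snd z j) powr p \<le> (\<Sum>n. norm (snd z n) powr p)"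
    using sum_le_suminf[OF summ, of "{j}"] by simp
  then have "norm (snd z j) powr p \<le> norm (fst z) powr p + (\<Sum>n. norm (snd z n) powr p)"
    by (simp add: add_increasing)
  then have "(norm (snd z j) powr p) powr (1/p) \<le> znorm p z"
    unfolding znorm_def using assms by (intro powr_mono2) auto
  then show ?thesis
    using assms by (simp add: powr_powr)
qed

lemma znorm_zscale:
  assumes "z \<in> Zp p" "p > 0"
  shows "znorm p (zscale c z) = \<bar>c\<bar> * znorm p z"
proof -
  have summ: "summable (\<lambda>n. norm (snd z n) powr p)"
    using assms Zp_iff by blast
  have "(\<Sum>n. norm (c *\<^sub>R snd z n) powr p) = \<bar>c\<bar> powr p * (\<Sum>n. norm (snd z n) powr p)"
    using suminf_mult[OF summ] by (simp add: powr_mult)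
  then have "znorm p (zscale c z) = (\<bar>c\<bar> powr p * (norm (fst z) powr p + (\<Sum>n. norm (snd z n) powr p))) powr (1/p)"
    unfolding znorm_def by (simp add: powr_mult algebra_simps)
  also have "\<dots> = (\<bar>c\<bar> powr p) powr (1/p) * znorm p z"
    unfolding znorm_def using summ by (subst powr_mult) (auto simp: suminf_norm_powr_nonneg)
  finally show ?thesis
    using assms by (simp add: powr_powr)
qed

lemma znorm_mono:
  assumes "w \<in> Zp p" "p > 0"
    and "norm (fst z) \<le> norm (fst w)" "\<And>j. norm (snd z j) \<le> norm (snd w j)"
  shows "znorm p z \<le> znorm p w"
proof -
  have sw: "summable (\<lambda>n. norm (snd w n) powr p)"
    using assms Zp_iff by blast
  have sz: "summable (\<lambda>n. norm (snd z n) powr p)"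
    using assms by (intro summable_comparison_test'[OF sw]) (auto intro: powr_mono2)
  have "(\<Sum>n. norm (snd z n) powr p) \<le> (\<Sum>n. norm (snd w n) powr p)"
    using sw sz assms by (intro suminf_le) (auto intro: powr_mono2)
  moreover have "norm (fst z) powr p \<le> norm (fst w) powr p"
    using assms by (auto intro: powr_mono2)
  ultimately show ?thesis
    unfolding znorm_def using assms sz by (intro powr_mono2) (auto simp: suminf_norm_powr_nonneg)
qed

lemma znorm_tail_small:
  assumes summ: "summable (\<lambda>n. norm (f n) powr p)" and "d > 0" "p > 0"
  obtains N where "\<And>M. M \<ge> N \<Longrightarrow>
    znorm p (0::'b::real_normed_vector, \<lambda>j. if j \<le> M then 0 else (f j :: 'a::real_normed_vector)) < d"
proof -
  obtain N where N: "\<And>n. n \<ge> N \<Longrightarrow> norm (\<Sum>i. norm (f (i + n)) powr p) < d powr p"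
    using suminf_exist_split[OF _ summ, of "d powr p"] \<open>d > 0\<close> by auto
  have "znorm p (0::'b, \<lambda>j. if j \<le> M then 0 else f j) < d" if "M \<ge> N" for M
  proof -
    define h where "h = (\<lambda>j. norm (if j \<le> M then 0 else f j) powr p)"
    have sh: "summable h"
      unfolding h_def by (rule summable_comparison_test'[OF summ]) auto
    have "suminf h = (\<Sum>i. h (i + Suc M))"
      using suminf_split_initial_segment[OF sh, of "Suc M"] by (simp add: h_def)
    also have "\<dots> = (\<Sum>i. norm (f (i + Suc M)) powr p)"
      by (simp add: h_def)
    finally have "suminf h < d powr p"
      using N[of "Suc M"] \<open>M \<ge> N\<close> by simp
    moreover have "suminf h \<ge> 0"
      using sh by (intro suminf_nonneg) (auto simp: h_def)
    ultimately have "suminf h powr (1/p) < (d powr p) powr (1/p)"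
      using \<open>p > 0\<close> by (intro powr_less_mono2) auto
    then show ?thesis
      unfolding znorm_def h_def using \<open>p > 0\<close> \<open>d > 0\<close> by (simp add: powr_powr)
  qed
  then show ?thesis
    using that by blast
qed

lemma zoperator_in_Zp: "zoperator p S \<Longrightarrow> z \<in> Zp p \<Longrightarrow> S z \<in> Zp p"
  and zoperator_outside: "zoperator p S \<Longrightarrow> z \<notin> Zp p \<Longrightarrow> S z = zzero"
  and zoperator_zadd: "zoperator p S \<Longrightarrow> z \<in> Zp p \<Longrightarrow> w \<in> Zp p \<Longrightarrow> S (zadd z w) = zadd (S z) (S w)"
  and zoperator_zscale: "zoperator p S \<Longrightarrow> z \<in> Zp p \<Longrightarrow> S (zscale c z) = zscale c (S z)"
  unfolding zoperator_def by blast+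

lemma zoperator_range: "zoperator p S \<Longrightarrow> S z \<in> Zp p"
  by (cases "z \<in> Zp p") (auto simp: zoperator_in_Zp zoperator_outside)

lemma zoperator_zsub:
  "zoperator p S \<Longrightarrow> z \<in> Zp p \<Longrightarrow> w \<in> Zp p \<Longrightarrow> S (zsub z w) = zsub (S z) (S w)"
  unfolding zsub_def by (simp add: zoperator_zadd zoperator_zscale zscale_in_Zp)

lemma zoperator_zzero: "zoperator p S \<Longrightarrow> S zzero = zzero"
  using zoperator_zscale[of p S zzero 0] by simp

lemma zoperator_bound:
  assumes "zoperator p S"
  obtains K where "K \<ge> 1" "\<And>z. z \<in> Zp p \<Longrightarrow> znorm p (S z) \<le> K * znorm p z"
proof -
  obtain K where K: "\<And>z. z \<in> Zp p \<Longrightarrow> znorm p (S z) \<le> K * znorm p z"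
    using assms unfolding zoperator_def by blast
  have "znorm p (S z) \<le> max K 1 * znorm p z" if "z \<in> Zp p" for z
    using K[OF that] mult_right_mono[OF max.cobounded1 znorm_nonneg] by (rule order_trans)
  then show ?thesis
    using that[of "max K 1"] by simp
qed

lemma zoperator_norm_fst_bound:
  assumes "zoperator p S" "p > 0"
  obtains K where "K \<ge> 1" "\<And>z. z \<in> Zp p \<Longrightarrow> norm (fst (S z)) \<le> K * znorm p z"
proof -
  obtain K where "K \<ge> 1" and K: "\<And>z. z \<in> Zp p \<Longrightarrow> znorm p (S z) \<le> K * znorm p z"
    using zoperator_bound[OF assms(1)] by blast
  moreover have "norm (fst (S z)) \<le> K * znorm p z" if "z \<in> Zp p" for z
    using norm_fst_le_znorm[OF zoperator_range[OF assms(1)] assms(2), of z] K[OF that] by linarith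
  ultimately show ?thesis
    using that by blast
qed

lemma zcompact_op_zoperator: "zcompact_op p S \<Longrightarrow> zoperator p S"
  by (simp add: zcompact_op_def)

lemma zcompact_opE:
  fixes x :: "nat \<Rightarrow> ('a::real_normed_vector, 'b::real_normed_vector) zpt"
  assumes "zcompact_op p S" "\<And>n. x n \<in> Zp p" "\<And>n. znorm p (x n) \<le> 1"
  obtains r w where "strict_mono r" "w \<in> Zp p" "(\<lambda>n. znorm p (zsub (S (x (r n))) w)) \<longlonglongrightarrow> 0"
proof -
  have "\<forall>x::nat \<Rightarrow> ('a, 'b) zpt. (\<forall>n. x n \<in> Zp p \<and> znorm p (x n) \<le> 1) \<longrightarrow>
      (\<exists>(r::nat \<Rightarrow> nat) w. strict_mono r \<and> w \<in> Zp p \<and> (\<lambda>n. znorm p (zsub (S (x (r n))) w)) \<longlonglongrightarrow> 0)"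
    using assms(1) by (simp add: zcompact_op_def)
  from spec[OF this, of x] show ?thesis
    using assms(2,3) that by blast
qed

section \<open>Compact operators are small on the far coordinates\<close>

lemma exists_nat_root_less_linear:
  fixes K d p :: real
  assumes "p > 1" "d > 0"
  obtains m :: nat where "m \<ge> 1" "K * real m powr (1/p) < real m * d"
proof -
  have "((\<lambda>m. real m powr (1/p - 1)) \<longlongrightarrow> 0) sequentially"
    using assms(1) by (intro tendsto_neg_powr filterlim_real_sequentially) (simp add: field_simps)
  then have "\<forall>\<^sub>F m in sequentially. K * real m powr (1/p - 1) < d"
    using tendsto_mult_right_zero[of _ _ K] assms(2) by (auto dest: order_tendstoD(2))
  then have "\<forall>\<^sub>F m in sequentially. 1 \<le> m \<and> K * real m powr (1/p - 1) < d"
    using eventually_ge_at_top[of "1::nat"] by (rule eventually_conj[rotated])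
  then obtain m :: nat where m: "m \<ge> 1" "K * real m powr (1/p - 1) < d"
    unfolding eventually_sequentially by blast
  have "K * real m powr (1/p) = K * real m powr (1/p - 1) * real m"
    using m(1) by (simp add: powr_diff)
  also have "\<dots> < real m * d"
    using m by (simp add: mult.commute)
  finally show ?thesis
    using that m(1) by blast
qed

lemma norm_sum_ge_near_constant:
  fixes a :: "'i \<Rightarrow> 'a::real_normed_vector"
  assumes "finite I" "\<And>i. i \<in> I \<Longrightarrow> norm (a i - w) \<le> d"
  shows "real (card I) * (norm w - d) \<le> norm (\<Sum>i\<in>I. a i)"
proof -
  have "norm (\<Sum>i\<in>I. a i - w) \<le> real (card I) * d"
    using norm_sum[of "\<lambda>i. a i - w" I] sum_bounded_above[of I "\<lambda>i. norm (a i - w)" d] assms(2)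
    by simp
  moreover have "(\<Sum>i\<in>I. a i) = real (card I) *\<^sub>R w + (\<Sum>i\<in>I. a i - w)"
    by (simp add: sum_subtractf sum_constant_scaleR)
  moreover have "norm (real (card I) *\<^sub>R w) = real (card I) * norm w"
    by simp
  ultimately show ?thesis
    using norm_triangle_ineq4[of "(\<Sum>i\<in>I. a i)" "(\<Sum>i\<in>I. a i - w)"]
    by (simp add: right_diff_distrib)
qed

lemma zoperator_fst_sum:
  fixes S :: "('a::real_normed_vector, 'b::real_normed_vector) zpt \<Rightarrow> ('a, 'b) zpt"
  assumes S: "zoperator p S" and "p > 0" "finite I"
    and z: "\<And>i. i \<in> I \<Longrightarrow> z i \<in> Zp p \<and> fst (z i) = 0"
  shows "(0::'b, \<lambda>j. \<Sum>i\<in>I. snd (z i) j) \<in> Zp p \<and>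
    fst (S (0::'b, \<lambda>j. \<Sum>i\<in>I. snd (z i) j)) = (\<Sum>i\<in>I. fst (S (z i)))"
  using \<open>finite I\<close> z
proof (induction I rule: finite_induct)
  case empty
  have "(0::'b, \<lambda>j. \<Sum>i\<in>{}. snd (z i) j) = zzero"
    by (simp add: zzero_def)
  then show ?case
    using zoperator_zzero[OF S] by (simp add: zzero_def)
next
  case (insert a I)
  have za: "z a \<in> Zp p" "fst (z a) = 0"
    using insert.prems by auto
  have eq: "(0::'b, \<lambda>j. \<Sum>i\<in>insert a I. snd (z i) j) = zadd (z a) (0, \<lambda>j. \<Sum>i\<in>I. snd (z i) j)"
    using insert.hyps za(2) by (simp add: zadd_def)
  have IH: "(0::'b, \<lambda>j. \<Sum>i\<in>I. snd (z i) j) \<in> Zp p"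
    "fst (S (0::'b, \<lambda>j. \<Sum>i\<in>I. snd (z i) j)) = (\<Sum>i\<in>I. fst (S (z i)))"
    using insert.IH insert.prems by auto
  show ?case
    unfolding eq using zadd_in_Zp[OF za(1) IH(1) \<open>p > 0\<close>] zoperator_zadd[OF S za(1) IH(1)] IH(2) insert.hyps
    by simp
qed

lemma znorm_disjoint_sum_le:
  fixes z :: "'i \<Rightarrow> ('a::real_normed_vector, 'b::real_normed_vector) zpt"
  assumes "p > 0" "finite I"
    and z: "\<And>i. i \<in> I \<Longrightarrow> z i \<in> Zp p \<and> fst (z i) = 0 \<and> znorm p (z i) \<le> 1"
    and disj: "\<And>i i' j. i \<in> I \<Longrightarrow> i' \<in> I \<Longrightarrow> i \<noteq> i' \<Longrightarrow> snd (z i) j = 0 \<or> snd (z i') j = 0"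
  shows "znorm p (0::'b, \<lambda>j. \<Sum>i\<in>I. snd (z i) j) \<le> real (card I) powr (1/p)"
proof -
  have summ: "summable (\<lambda>j. norm (snd (z i) j) powr p)" if "i \<in> I" for i
    using z[OF that] Zp_iff by blast
  have "norm (\<Sum>i\<in>I. snd (z i) j) powr p = (\<Sum>i\<in>I. norm (snd (z i) j) powr p)" for j
  proof (cases "\<exists>i\<in>I. snd (z i) j \<noteq> 0")
    case True
    then obtain i0 where i0: "i0 \<in> I" "\<And>i. i \<in> I - {i0} \<Longrightarrow> snd (z i) j = 0"
      using disj by blast
    then show ?thesis
      using sum.remove[OF \<open>finite I\<close> i0(1), of "\<lambda>i. snd (z i) j"]
        sum.remove[OF \<open>finite I\<close> i0(1), of "\<lambda>i. norm (snd (z i) j) powr p"] by simp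
  qed simp
  then have tot: "(\<Sum>j. norm (\<Sum>i\<in>I. snd (z i) j) powr p) = (\<Sum>i\<in>I. \<Sum>j. norm (snd (z i) j) powr p)"
    using suminf_sum[of I "\<lambda>i j. norm (snd (z i) j) powr p"] summ by simp
  have "(\<Sum>j. norm (snd (z i) j) powr p) \<le> 1" if "i \<in> I" for i
  proof -
    have "znorm p (z i) powr p \<le> 1"
      using powr_mono2[of p "znorm p (z i)" 1] z[OF that] znorm_nonneg[of p "z i"] \<open>p > 0\<close> by simp
    then show ?thesis
      using znorm_powr[of "z i" p] z[OF that] \<open>p > 0\<close> by simp
  qed
  then have "(\<Sum>j. norm (\<Sum>i\<in>I. snd (z i) j) powr p) \<le> real (card I)"
    unfolding tot using sum_mono[of I "\<lambda>i. \<Sum>j. norm (snd (z i) j) powr p" "\<lambda>_. 1"] by simp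
  moreover have "(\<Sum>j. norm (\<Sum>i\<in>I. snd (z i) j) powr p) \<ge> 0"
    unfolding tot using summ by (intro sum_nonneg suminf_nonneg) auto
  ultimately show ?thesis
    unfolding znorm_def using \<open>p > 0\<close> by (simp add: powr_mono2)
qed

lemma exists_truncation_with_large_fst:
  fixes S :: "('a::real_normed_vector, 'b::real_normed_vector) zpt \<Rightarrow> ('a, 'b) zpt"
  assumes S: "zoperator p S" and "p > 0"
    and u: "u \<in> Zp p" "fst u = 0" "\<forall>j\<le>N. snd u j = 0" "znorm p u \<le> 1" "e < norm (fst (S u))"
  obtains v M where "N < M" "v \<in> Zp p" "fst v = 0" "\<forall>j. snd v j \<noteq> 0 \<longrightarrow> N < j \<and> j \<le> M"
    "znorm p v \<le> 1" "e < norm (fst (S v))"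
proof -
  obtain K where K: "K \<ge> 1" "\<And>z. z \<in> Zp p \<Longrightarrow> norm (fst (S z)) \<le> K * znorm p z"
    using zoperator_norm_fst_bound[OF S \<open>p > 0\<close>] by blast
  define d where "d = (norm (fst (S u)) - e) / K"
  have "d > 0"
    using u(5) K(1) by (simp add: d_def)
  obtain N0 where N0: "\<And>M. M \<ge> N0 \<Longrightarrow> znorm p (0::'b, \<lambda>j. if j \<le> M then 0 else snd u j) < d"
    using znorm_tail_small[of "snd u" p d] u(1) \<open>d > 0\<close> \<open>p > 0\<close> by (auto simp: Zp_iff)
  define M where "M = max (Suc N) N0"
  define v where "v = (0::'b, \<lambda>j. if j \<le> M then snd u j else 0)"
  define t where "t = (0::'b, \<lambda>j. if j \<le> M then 0 else snd u j)"
  have vt: "v \<in> Zp p" "t \<in> Zp p"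
    unfolding v_def t_def using u(1) \<open>p > 0\<close> by (auto intro!: Zp_dominated[OF u(1)] simp: Zp_iff[of u])
  have "zsub u v = t"
    using u(2) by (auto simp: v_def t_def prod_eq_iff)
  then have "norm (fst (S u) - fst (S v)) \<le> K * znorm p t"
    using K(2)[OF vt(2)] zoperator_zsub[OF S u(1) vt(1)] by simp
  also have "\<dots> < K * d"
    using N0[of M] K(1) by (simp add: M_def t_def)
  finally have "e < norm (fst (S v))"
    using norm_triangle_ineq2[of "fst (S u)" "fst (S v)"] K(1) by (simp add: d_def)
  moreover have "znorm p v \<le> znorm p u"
    unfolding v_def using u(1,2) \<open>p > 0\<close> by (intro znorm_mono) auto
  moreover have "\<forall>j. snd v j \<noteq> 0 \<longrightarrow> N < j \<and> j \<le> M"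
    using u(3) by (auto simp: v_def not_le)
  ultimately show ?thesis
    using that[of M v] vt(1) u(4) by (simp add: M_def v_def)
qed

lemma exists_block_with_large_fst:
  fixes S :: "('a::real_normed_vector, 'b::real_normed_vector) zpt \<Rightarrow> ('a, 'b) zpt"
  assumes S: "zoperator p S" and "p > 0"
    and z: "z \<in> Zp p" "fst z = 0" "\<forall>j\<le>N. snd z j = 0" "e * znorm p z < norm (fst (S z))"
  obtains v M where "N < M" "v \<in> Zp p" "fst v = 0" "\<forall>j. snd v j \<noteq> 0 \<longrightarrow> N < j \<and> j \<le> M"
    "znorm p v \<le> 1" "e < norm (fst (S v))"
proof -
  obtain K where K: "K \<ge> 1" "\<And>z. z \<in> Zp p \<Longrightarrow> norm (fst (S z)) \<le> K * znorm p z"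
    using zoperator_norm_fst_bound[OF S \<open>p > 0\<close>] by blast
  define r where "r = znorm p z"
  have "r > 0"
    using K(2)[OF z(1)] z(4) znorm_nonneg[of p z] unfolding r_def
    by (metis less_eq_real_def mult_zero_right not_le)
  define u where "u = zscale (1/r) z"
  have u: "u \<in> Zp p" "fst u = 0" "\<forall>j\<le>N. snd u j = 0" "znorm p u \<le> 1"
    using z zscale_in_Zp[OF z(1)] znorm_zscale[OF z(1) \<open>p > 0\<close>] \<open>r > 0\<close>
    by (simp_all add: u_def r_def)
  have "r * norm (fst (S u)) = norm (fst (S z))"
    unfolding u_def zoperator_zscale[OF S z(1)] using \<open>r > 0\<close> by simp
  then have "r * e < r * norm (fst (S u))"
    using z(4) by (simp add: r_def mult.commute)
  then have large: "e < norm (fst (S u))"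
    using \<open>r > 0\<close> by simp
  show ?thesis
    by (rule exists_truncation_with_large_fst[OF S \<open>p > 0\<close> u large]) (rule that)
qed

lemma exists_disjoint_blocks_sequence:
  fixes P :: "'a \<times> (nat \<Rightarrow> 'b::zero) \<Rightarrow> bool"
  assumes "\<And>N::nat. \<exists>v M. N < M \<and> P v \<and> (\<forall>j. snd v j \<noteq> 0 \<longrightarrow> N < j \<and> j \<le> M)"
  shows "\<exists>x::nat \<Rightarrow> 'a \<times> (nat \<Rightarrow> 'b). (\<forall>i. P (x i)) \<and> (\<forall>i i' j. i \<noteq> i' \<longrightarrow> snd (x i) j = 0 \<or> snd (x i') j = 0)"
proof -
  have "\<forall>N. \<exists>q. N < snd q \<and> P (fst q) \<and> (\<forall>j. snd (fst q) j \<noteq> 0 \<longrightarrow> N < j \<and> j \<le> snd q)"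
  proof
    fix N
    obtain v M where "N < M" "P v" "\<forall>j. snd v j \<noteq> 0 \<longrightarrow> N < j \<and> j \<le> M"
      using assms[of N] by blast
    then show "\<exists>q. N < snd q \<and> P (fst q) \<and> (\<forall>j. snd (fst q) j \<noteq> 0 \<longrightarrow> N < j \<and> j \<le> snd q)"
      by (intro exI[of _ "(v, M)"]) simp
  qed
  from choice[OF this] obtain F where F: "\<And>N. N < snd (F N) \<and> P (fst (F N)) \<and>
      (\<forall>j. snd (fst (F N)) j \<noteq> 0 \<longrightarrow> N < j \<and> j \<le> snd (F N))"
    by blast
  define b where "b = rec_nat 0 (\<lambda>_ n. snd (F n))"
  have b_Suc: "b (Suc i) = snd (F (b i))" for i
    by (simp add: b_def)
  have "strict_mono b"
    unfolding strict_mono_Suc_iff using F b_Suc by simp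
  define x where "x i = fst (F (b i))" for i
  have supp: "snd (x i) j \<noteq> 0 \<Longrightarrow> b i < j \<and> j \<le> b (Suc i)" for i j
    using F unfolding x_def b_Suc by blast
  have "snd (x i) j = 0 \<or> snd (x i') j = 0" if "i < i'" for i i' j
    using supp[of i j] supp[of i' j] strict_mono_leD[OF \<open>strict_mono b\<close>, of "Suc i" i'] that
    by fastforce
  then have "snd (x i) j = 0 \<or> snd (x i') j = 0" if "i \<noteq> i'" for i i' j
    using that by (metis linorder_neqE_nat)
  then show ?thesis
    using F by (intro exI[of _ x]) (auto simp: x_def)
qed

lemma exists_disjoint_blocks_with_large_fst:
  fixes S :: "('a::real_normed_vector, 'b::real_normed_vector) zpt \<Rightarrow> ('a, 'b) zpt"
  assumes S: "zoperator p S" and "p > 0"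
    and large: "\<And>N. \<exists>z. z \<in> Zp p \<and> fst z = 0 \<and> (\<forall>j\<le>N. snd z j = 0) \<and> e * znorm p z < norm (fst (S z))"
  shows "\<exists>x::nat \<Rightarrow> ('a, 'b) zpt. (\<forall>i. x i \<in> Zp p \<and> fst (x i) = 0 \<and> znorm p (x i) \<le> 1 \<and> e < norm (fst (S (x i))))
    \<and> (\<forall>i i' j. i \<noteq> i' \<longrightarrow> snd (x i) j = 0 \<or> snd (x i') j = 0)"
proof (rule exists_disjoint_blocks_sequence)
  fix N :: nat
  obtain z where "z \<in> Zp p" "fst z = 0" "\<forall>j\<le>N. snd z j = 0" "e * znorm p z < norm (fst (S z))"
    using large[of N] by blast
  then obtain v M where "N < M" "v \<in> Zp p" "fst v = 0" "\<forall>j. snd v j \<noteq> 0 \<longrightarrow> N < j \<and> j \<le> M"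
    "znorm p v \<le> 1" "e < norm (fst (S v))"
    by (rule exists_block_with_large_fst[OF S \<open>p > 0\<close>])
  then show "\<exists>v M. N < M \<and> (v \<in> Zp p \<and> fst v = 0 \<and> znorm p v \<le> 1 \<and> e < norm (fst (S v)))
      \<and> (\<forall>j. snd v j \<noteq> 0 \<longrightarrow> N < j \<and> j \<le> M)"
    by blast
qed

lemma norm_fst_sum_disjoint_blocks_le:
  fixes S :: "('a::real_normed_vector, 'b::real_normed_vector) zpt \<Rightarrow> ('a, 'b) zpt"
  assumes S: "zoperator p S" and "p > 0"
    and K: "K \<ge> 0" "\<And>z. z \<in> Zp p \<Longrightarrow> norm (fst (S z)) \<le> K * znorm p z"
    and "finite I"
    and x: "\<And>i. i \<in> I \<Longrightarrow> x i \<in> Zp p \<and> fst (x i) = 0 \<and> znorm p (x i) \<le> 1"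
    and disj: "\<And>i i' j. i \<in> I \<Longrightarrow> i' \<in> I \<Longrightarrow> i \<noteq> i' \<Longrightarrow> snd (x i) j = 0 \<or> snd (x i') j = 0"
  shows "norm (\<Sum>i\<in>I. fst (S (x i))) \<le> K * real (card I) powr (1/p)"
proof -
  have sum: "(0::'b, \<lambda>j. \<Sum>i\<in>I. snd (x i) j) \<in> Zp p \<and>
      fst (S (0, \<lambda>j. \<Sum>i\<in>I. snd (x i) j)) = (\<Sum>i\<in>I. fst (S (x i)))"
    using x by (intro zoperator_fst_sum[OF S \<open>p > 0\<close> \<open>finite I\<close>]) auto
  then have "norm (\<Sum>i\<in>I. fst (S (x i))) \<le> K * znorm p (0::'b, \<lambda>j. \<Sum>i\<in>I. snd (x i) j)"
    using K(2) by metis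
  also have "\<dots> \<le> K * real (card I) powr (1/p)"
    using znorm_disjoint_sum_le[OF \<open>p > 0\<close> \<open>finite I\<close> x disj] K(1) by (intro mult_left_mono)
  finally show ?thesis .
qed

lemma zcompact_op_fst_cluster:
  fixes S :: "('a::real_normed_vector, 'b::real_normed_vector) zpt \<Rightarrow> ('a, 'b) zpt"
    and x :: "nat \<Rightarrow> ('a, 'b) zpt"
  assumes "p > 0" and Sc: "zcompact_op p S" and x: "\<And>n. x n \<in> Zp p" "\<And>n. znorm p (x n) \<le> 1"
    and "d > 0"
  obtains r :: "nat \<Rightarrow> nat" and i0 :: nat and y
  where "strict_mono r" "\<And>i. i \<ge> i0 \<Longrightarrow> norm (fst (S (x (r i))) - y) < d"
proof -
  obtain r w where r: "strict_mono r" "w \<in> Zp p" "(\<lambda>n. znorm p (zsub (S (x (r n))) w)) \<longlonglongrightarrow> 0"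
    by (rule zcompact_opE[OF Sc, where x = x, OF x])
  have "(\<lambda>n. norm (fst (S (x (r n))) - fst w)) \<longlonglongrightarrow> 0"
    using norm_fst_le_znorm[OF zsub_in_Zp[OF zoperator_range[OF zcompact_op_zoperator[OF Sc]] r(2) \<open>p > 0\<close>] \<open>p > 0\<close>]
    by (intro tendsto_sandwich[OF _ _ tendsto_const r(3)]) auto
  then have "\<forall>\<^sub>F i in sequentially. norm (fst (S (x (r i))) - fst w) < d"
    using \<open>d > 0\<close> by (rule order_tendstoD(2))
  then obtain i0 where "\<And>i. i \<ge> i0 \<Longrightarrow> norm (fst (S (x (r i))) - fst w) < d"
    unfolding eventually_sequentially by blast
  then show ?thesis
    by (rule that[OF r(1)])
qed

text \<open>If P_0 S were not small on the tails, there would be unit blocks x_i with disjoint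
  supports and norm(P_0 S x_i) > e. Compactness makes P_0 S x_i cluster at some y with
  norm y >= 3e/4, so m of them sum to norm at least m e/2 under P_0 S, while the sum of
  the blocks has norm m^(1/p) only: impossible for large m since p > 1.\<close>

lemma zcompact_op_fst_tail_small:
  fixes S :: "('a::real_normed_vector, 'b::real_normed_vector) zpt \<Rightarrow> ('a, 'b) zpt"
  assumes "p > 1" and Sc: "zcompact_op p S" and "e > 0"
  obtains N where "\<And>z. z \<in> Zp p \<Longrightarrow> fst z = 0 \<Longrightarrow> \<forall>j\<le>N. snd z j = 0 \<Longrightarrow>
    norm (fst (S z)) \<le> e * znorm p z"
proof (rule ccontr)
  assume "\<not> thesis"
  then have large: "\<exists>z. z \<in> Zp p \<and> fst z = 0 \<and> (\<forall>j\<le>N. snd z j = 0) \<and> e * znorm p z < norm (fst (S z))" for N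
    using that by (meson not_le)
  have "p > 0"
    using \<open>p > 1\<close> by simp
  have S: "zoperator p S"
    using Sc by (rule zcompact_op_zoperator)
  obtain K where K: "K \<ge> 1" "\<And>z. z \<in> Zp p \<Longrightarrow> norm (fst (S z)) \<le> K * znorm p z"
    using zoperator_norm_fst_bound[OF S \<open>p > 0\<close>] by blast
  obtain x :: "nat \<Rightarrow> ('a, 'b) zpt"
    where x: "\<And>i. x i \<in> Zp p \<and> fst (x i) = 0 \<and> znorm p (x i) \<le> 1 \<and> e < norm (fst (S (x i)))"
    and disj: "\<And>i i' j. i \<noteq> i' \<Longrightarrow> snd (x i) j = 0 \<or> snd (x i') j = 0"
    using exists_disjoint_blocks_with_large_fst[OF S \<open>p > 0\<close> large] by blast
  have x_in: "\<And>i. x i \<in> Zp p" and x_le: "\<And>i. znorm p (x i) \<le> 1" and "e/4 > 0"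
    using x \<open>e > 0\<close> by simp_all
  then obtain r :: "nat \<Rightarrow> nat" and i0 :: nat and y
    where r: "strict_mono r" and i0: "\<And>i. i \<ge> i0 \<Longrightarrow> norm (fst (S (x (r i))) - y) < e/4"
    using zcompact_op_fst_cluster[OF \<open>p > 0\<close> Sc, where x = x] by blast
  have "norm y > 3 * e / 4"
    using i0[of i0] x[of "r i0"] norm_triangle_ineq2[of "fst (S (x (r i0)))" y] by simp
  obtain m :: nat where m: "m \<ge> 1" "K * real m powr (1/p) < real m * (e/2)"
    using exists_nat_root_less_linear[OF \<open>p > 1\<close>, of "e/2" K] \<open>e > 0\<close> by auto
  define I where "I = {i0..<i0 + m}"
  have I: "finite I" "card I = m"
    by (auto simp: I_def)
  have "real m * (e/2) \<le> real m * (norm y - e/4)"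
    using \<open>norm y > 3 * e / 4\<close> by (intro mult_left_mono) auto
  also have "\<dots> \<le> norm (\<Sum>i\<in>I. fst (S (x (r i))))"
    using norm_sum_ge_near_constant[OF I(1), of "\<lambda>i. fst (S (x (r i)))" y "e/4"] i0 I(2)
    by (simp add: I_def less_imp_le)
  also have "\<dots> \<le> K * real m powr (1/p)"
    using norm_fst_sum_disjoint_blocks_le[OF S \<open>p > 0\<close> _ K(2) I(1), of "\<lambda>i. x (r i)"] x disj
      strict_mono_eq[OF r(1)] K(1) I(2) by simp
  finally show False
    using m(2) by simp
qed

section \<open>Approximability of P_0 S on the coordinates A\<close>

lemma zoperator_fst_split_head:
  fixes S :: "('a::real_normed_vector, 'b::real_normed_vector) zpt \<Rightarrow> ('a, 'b) zpt"
  assumes S: "zoperator p S" and "p > 0" and g: "(0, g) \<in> Zp p"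
  shows "fst (S (0, g)) = (\<Sum>j\<in>{1..N}. fst (S (0, (\<lambda>_. 0)(j := g j))))
           + fst (S (0, \<lambda>j. if j \<le> N then 0 else g j))"
proof (induction N)
  case 0
  have "(\<lambda>j. if j \<le> (0::nat) then 0 else g j) = g"
    using g by (auto simp: Zp_def)
  then show ?case
    by simp
next
  case (Suc N)
  have g0: "g 0 = 0"
    using g by (simp add: Zp_def)
  have head: "(0::'b, (\<lambda>_. 0)(Suc N := g (Suc N))) \<in> Zp p"
    and tail: "(0::'b, \<lambda>j. if j \<le> Suc N then 0 else g j) \<in> Zp p"
    by (auto simp: g0 \<open>p > 0\<close> intro!: Zp_dominated[OF g])
  have "(0::'b, \<lambda>j. if j \<le> N then 0 else g j)
      = zadd (0, (\<lambda>_. 0)(Suc N := g (Suc N))) (0, \<lambda>j. if j \<le> Suc N then 0 else g j)"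
    by (auto simp: zadd_def le_Suc_eq)
  then have "fst (S (0, \<lambda>j. if j \<le> N then 0 else g j))
     = fst (S (0, (\<lambda>_. 0)(Suc N := g (Suc N)))) + fst (S (0, \<lambda>j. if j \<le> Suc N then 0 else g j))"
    using zoperator_zadd[OF S head tail] by simp
  then show ?case
    using Suc by (simp add: add.assoc fun_upd_def)
qed

lemma bounded_linear_fst_zoperator_comp:
  fixes S :: "('a::real_normed_vector, 'b::real_normed_vector) zpt \<Rightarrow> ('a, 'b) zpt"
    and G :: "'c::real_normed_vector \<Rightarrow> nat \<Rightarrow> 'a"
  assumes S: "zoperator p S" and "p > 0"
    and G_in: "\<And>x. (0::'b, G x) \<in> Zp p"
    and G_add: "\<And>x y. G (x + y) = (\<lambda>n. G x n + G y n)"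
    and G_scale: "\<And>c x. G (c *\<^sub>R x) = (\<lambda>n. c *\<^sub>R G x n)"
    and G_bound: "\<And>x. znorm p (0::'b, G x) \<le> M * norm x"
  shows "bounded_linear (\<lambda>x. fst (S (0, G x)))"
proof -
  obtain K where K: "K \<ge> 1" "\<And>z. z \<in> Zp p \<Longrightarrow> norm (fst (S z)) \<le> K * znorm p z"
    using zoperator_norm_fst_bound[OF S \<open>p > 0\<close>] by blast
  show ?thesis
  proof (rule bounded_linear_intro)
    fix x y
    have "(0::'b, G (x + y)) = zadd (0, G x) (0, G y)"
      by (simp add: G_add zadd_def)
    then show "fst (S (0, G (x + y))) = fst (S (0, G x)) + fst (S (0, G y))"
      using zoperator_zadd[OF S G_in G_in] by simp
  next
    fix c x
    have "(0::'b, G (c *\<^sub>R x)) = zscale c (0, G x)"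
      by (simp add: G_scale zscale_def)
    then show "fst (S (0, G (c *\<^sub>R x))) = c *\<^sub>R fst (S (0, G x))"
      using zoperator_zscale[OF S G_in] by simp
  next
    show "norm (fst (S (0, G x))) \<le> norm x * (K * M)" for x
      using order_trans[OF K(2)[OF G_in] mult_left_mono[OF G_bound, of K]] K(1) by (simp add: algebra_simps)
  qed
qed

lemma fst_zoperator_head_approx:
  fixes S :: "('a::real_normed_vector, 'b::real_normed_vector) zpt \<Rightarrow> ('a, 'b) zpt"
    and G :: "'c::real_normed_vector \<Rightarrow> nat \<Rightarrow> 'a"
  assumes S: "zoperator p S" and "p > 0"
    and G_in: "\<And>x. (0::'b, G x) \<in> Zp p"
    and G_bound: "\<And>x. znorm p (0::'b, G x) \<le> M * norm x"
    and G_supp: "\<And>x j. G x j \<noteq> 0 \<Longrightarrow> j \<in> A"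
    and "d \<ge> 0" and tail: "\<And>z. z \<in> Zp p \<Longrightarrow> fst z = 0 \<Longrightarrow> \<forall>j\<le>N. snd z j = 0 \<Longrightarrow>
      norm (fst (S z)) \<le> d * znorm p z"
  shows "norm (fst (S (0, G x)) - (\<Sum>j\<in>{1..N} \<inter> A. P0SJk S j (G x j))) \<le> d * M * norm x"
proof -
  have "fst (S (0::'b, (\<lambda>_. 0)(j := G x j))) = (if j \<in> A then P0SJk S j (G x j) else 0)" for j
  proof (cases "j \<in> A")
    case False
    then have "(0::'b, (\<lambda>_. 0)(j := G x j)) = zzero"
      using G_supp by (auto simp: zzero_def fun_eq_iff)
    then show ?thesis
      using False zoperator_zzero[OF S] by (simp add: zzero_def)
  qed (simp add: P0SJk_def)
  then have head: "(\<Sum>j\<in>{1..N}. fst (S (0::'b, (\<lambda>_. 0)(j := G x j)))) = (\<Sum>j\<in>{1..N} \<inter> A. P0SJk S j (G x j))"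
    by (simp add: sum.inter_restrict)
  have tail_in: "(0::'b, \<lambda>j. if j \<le> N then 0 else G x j) \<in> Zp p"
    using G_in[of x] \<open>p > 0\<close> by (intro Zp_dominated[OF G_in]) (auto simp: Zp_def)
  have "norm (fst (S (0, G x)) - (\<Sum>j\<in>{1..N} \<inter> A. P0SJk S j (G x j)))
      = norm (fst (S (0::'b, \<lambda>j. if j \<le> N then 0 else G x j)))"
    using zoperator_fst_split_head[OF S \<open>p > 0\<close> G_in[of x], where N = N] head by simp
  also have "\<dots> \<le> d * znorm p (0::'b, \<lambda>j. if j \<le> N then 0 else G x j)"
    using tail[OF tail_in] by simp
  also have "\<dots> \<le> d * znorm p (0::'b, G x)"
    using \<open>d \<ge> 0\<close> \<open>p > 0\<close> by (intro mult_left_mono znorm_mono[OF G_in]) auto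
  also have "\<dots> \<le> d * (M * norm x)"
    using \<open>d \<ge> 0\<close> G_bound by (simp add: mult_left_mono)
  finally show ?thesis
    by (simp add: mult.assoc)
qed

lemma approximable_fst_zcompact_comp:
  fixes S :: "('a::real_normed_vector, 'b::real_normed_vector) zpt \<Rightarrow> ('a, 'b) zpt"
    and G :: "'c::real_normed_vector \<Rightarrow> nat \<Rightarrow> 'a"
  assumes "p > 1" and Sc: "zcompact_op p S"
    and approx_A: "\<And>j. j \<in> A \<Longrightarrow> approximable (P0SJk S j)"
    and G_in: "\<And>x. (0::'b, G x) \<in> Zp p"
    and G_add: "\<And>x y. G (x + y) = (\<lambda>n. G x n + G y n)"
    and G_scale: "\<And>c x. G (c *\<^sub>R x) = (\<lambda>n. c *\<^sub>R G x n)"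
    and G_bound: "\<And>x. znorm p (0::'b, G x) \<le> M * norm x" and "M \<ge> 0"
    and G_supp: "\<And>x j. G x j \<noteq> 0 \<Longrightarrow> j \<in> A"
  shows "approximable (\<lambda>x. fst (S (0, G x)))"
proof (rule approximable_closed)
  have "p > 0"
    using \<open>p > 1\<close> by simp
  have S: "zoperator p S"
    using Sc by (rule zcompact_op_zoperator)
  show "bounded_linear (\<lambda>x. fst (S (0, G x)))"
    using bounded_linear_fst_zoperator_comp[OF S \<open>p > 0\<close> G_in G_add G_scale G_bound] .
  have coord: "bounded_linear (\<lambda>x. G x j)" for j
  proof (rule bounded_linear_intro)
    show "norm (G x j) \<le> norm x * M" for x
      using norm_snd_le_znorm[OF G_in \<open>p > 0\<close>, of x j] G_bound[of x] by (simp add: mult.commute)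
  qed (simp_all add: G_add G_scale)
  fix e :: real
  assume "e > 0"
  obtain d where "d > 0" "d * M < e"
    using \<open>e > 0\<close> \<open>M \<ge> 0\<close> by (intro that[of "e / (M + 1)"]) (auto simp: field_simps)
  obtain N where N: "\<And>z. z \<in> Zp p \<Longrightarrow> fst z = 0 \<Longrightarrow> \<forall>j\<le>N. snd z j = 0 \<Longrightarrow>
      norm (fst (S z)) \<le> d * znorm p z"
    using zcompact_op_fst_tail_small[OF \<open>p > 1\<close> Sc \<open>d > 0\<close>] by blast
  have "approximable (\<lambda>x. \<Sum>j\<in>{1..N} \<inter> A. P0SJk S j (G x j))"
    by (rule approximable_sum) (auto intro: approximable_comp[OF approx_A coord])
  moreover have "onorm (\<lambda>x. fst (S (0, G x)) - (\<Sum>j\<in>{1..N} \<inter> A. P0SJk S j (G x j))) \<le> d * M"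
  proof (rule onorm_bound)
    show "0 \<le> d * M"
      using \<open>d > 0\<close> \<open>M \<ge> 0\<close> by simp
    show "norm (fst (S (0, G x)) - (\<Sum>j\<in>{1..N} \<inter> A. P0SJk S j (G x j))) \<le> d * M * norm x" for x
      by (rule fst_zoperator_head_approx[OF S \<open>p > 0\<close> G_in G_bound G_supp less_imp_le[OF \<open>d > 0\<close>] N])
  qed
  ultimately show "\<exists>H. approximable H \<and> onorm (\<lambda>x. fst (S (0, G x)) - H x) < e"
    using \<open>d * M < e\<close> by fastforce
qed

section \<open>Conjugation\<close>

text \<open>Conjugation S \<mapsto> U S U' by a pair with this property maps I_A onto I_B.\<close>

definition support_transfer :: "real \<Rightarrow> nat set \<Rightarrow> nat set \<Rightarrow>
    (('a::real_normed_vector, 'b::real_normed_vector) zpt \<Rightarrow> ('a, 'b) zpt) \<Rightarrow> (('a, 'b) zpt \<Rightarrow> ('a, 'b) zpt) \<Rightarrow> bool" where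
  "support_transfer p A B U U' \<longleftrightarrow> zoperator p U \<and> zoperator p U' \<and>
     (\<forall>z\<in>Zp p. U' (U z) = z \<and> U (U' z) = z) \<and>
     (\<forall>z\<in>Zp p. fst (U z) = fst z \<and> fst (U' z) = fst z) \<and>
     (\<forall>y. U (y, \<lambda>_. 0) = (y, \<lambda>_. 0) \<and> U' (y, \<lambda>_. 0) = (y, \<lambda>_. 0)) \<and>
     (\<forall>z\<in>Zp p. fst z = 0 \<longrightarrow> {j. snd z j \<noteq> 0} \<subseteq> A \<longrightarrow> {j. snd (U z) j \<noteq> 0} \<subseteq> B) \<and>
     (\<forall>z\<in>Zp p. fst z = 0 \<longrightarrow> {j. snd z j \<noteq> 0} \<subseteq> B \<longrightarrow> {j. snd (U' z) j \<noteq> 0} \<subseteq> A)"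

lemma support_transfer_sym: "support_transfer p A B U U' \<Longrightarrow> support_transfer p B A U' U"
  unfolding support_transfer_def by blast

lemma support_transferD:
  assumes "support_transfer p A B U U'"
  shows "zoperator p U" "zoperator p U'"
    and "\<And>z. z \<in> Zp p \<Longrightarrow> U' (U z) = z"
    and "\<And>z. z \<in> Zp p \<Longrightarrow> fst (U z) = fst z" "\<And>z. z \<in> Zp p \<Longrightarrow> fst (U' z) = fst z"
    and "\<And>y. U' (y, \<lambda>_. 0) = (y, \<lambda>_. 0)"
    and "\<And>z. z \<in> Zp p \<Longrightarrow> fst z = 0 \<Longrightarrow> {j. snd z j \<noteq> 0} \<subseteq> B \<Longrightarrow> {j. snd (U' z) j \<noteq> 0} \<subseteq> A"
  using assms unfolding support_transfer_def by blast+

lemma znorm_le_on_unit_ball: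
  assumes "K \<ge> 0" "\<And>z. z \<in> Zp p \<Longrightarrow> znorm p (S z) \<le> K * znorm p z" "z \<in> Zp p" "znorm p z \<le> 1"
  shows "znorm p (S z) \<le> K"
  using order_trans[OF assms(2)[OF assms(3)] mult_left_mono[OF assms(4,1)]] by simp

lemma zscale_into_unit_ball:
  assumes "p > 0" "K > 0" "w \<in> Zp p" "znorm p w \<le> K"
  shows "zscale (1/K) w \<in> Zp p" "znorm p (zscale (1/K) w) \<le> 1" "zscale K (zscale (1/K) w) = w"
  using assms zscale_in_Zp[of w p] znorm_zscale[of w p "1/K"] by (simp_all add: prod_eq_iff)

lemma zoperator_conj:
  assumes U: "zoperator p U" and S: "zoperator p S" and U': "zoperator p U'"
  shows "zoperator p (\<lambda>z. U (S (U' z)))"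
  unfolding zoperator_def
proof (intro conjI ballI allI impI)
  have U'_in: "U' z \<in> Zp p" and SU'_in: "S (U' z) \<in> Zp p" for z
    using zoperator_range[OF U'] zoperator_in_Zp[OF S] by blast+
  show "U (S (U' z)) \<in> Zp p" for z
    using zoperator_range[OF U] .
  show "U (S (U' z)) = zzero" if "z \<notin> Zp p" for z
    using that by (simp add: zoperator_outside[OF U'] zoperator_zzero[OF S] zoperator_zzero[OF U])
  show "U (S (U' (zadd z w))) = zadd (U (S (U' z))) (U (S (U' w)))" if "z \<in> Zp p" "w \<in> Zp p" for z w
    using that by (simp add: zoperator_zadd[OF U'] zoperator_zadd[OF S U'_in U'_in] zoperator_zadd[OF U SU'_in SU'_in])
  show "U (S (U' (zscale c z))) = zscale c (U (S (U' z)))" if "z \<in> Zp p" for c z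
    using that by (simp add: zoperator_zscale[OF U'] zoperator_zscale[OF S U'_in] zoperator_zscale[OF U SU'_in])
  obtain KU KS K' where KU: "KU \<ge> 1" "\<And>z. z \<in> Zp p \<Longrightarrow> znorm p (U z) \<le> KU * znorm p z"
    and KS: "KS \<ge> 1" "\<And>z. z \<in> Zp p \<Longrightarrow> znorm p (S z) \<le> KS * znorm p z"
    and K': "K' \<ge> 1" "\<And>z. z \<in> Zp p \<Longrightarrow> znorm p (U' z) \<le> K' * znorm p z"
    using zoperator_bound[OF U] zoperator_bound[OF S] zoperator_bound[OF U'] by metis
  have "znorm p (U (S (U' z))) \<le> (KU * KS * K') * znorm p z" if "z \<in> Zp p" for z
  proof -
    have "znorm p (U (S (U' z))) \<le> KU * (KS * znorm p (U' z))"
      using order_trans[OF KU(2)[OF SU'_in] mult_left_mono[OF KS(2)[OF U'_in]]] KU(1) by simp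
    also have "\<dots> \<le> KU * (KS * (K' * znorm p z))"
      using K'(2)[OF that] KU(1) KS(1) by (intro mult_left_mono) auto
    finally show ?thesis
      by (simp add: mult.assoc)
  qed
  then show "\<exists>K. \<forall>z\<in>Zp p. znorm p (U (S (U' z))) \<le> K * znorm p z"
    by blast
qed

lemma zcompact_op_conj:
  fixes S :: "('a::real_normed_vector, 'b::real_normed_vector) zpt \<Rightarrow> ('a, 'b) zpt"
  assumes U: "zoperator p U" and Sc: "zcompact_op p S" and U': "zoperator p U'" and "p > 0"
  shows "zcompact_op p (\<lambda>z. U (S (U' z)))"
  unfolding zcompact_op_def
proof (intro conjI allI impI)
  have S: "zoperator p S"
    using Sc by (rule zcompact_op_zoperator)
  show "zoperator p (\<lambda>z. U (S (U' z)))"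
    using zoperator_conj[OF U S U'] .
  obtain KU K' where KU: "KU \<ge> 1" "\<And>z. z \<in> Zp p \<Longrightarrow> znorm p (U z) \<le> KU * znorm p z"
    and K': "K' \<ge> 1" "\<And>z. z \<in> Zp p \<Longrightarrow> znorm p (U' z) \<le> K' * znorm p z"
    using zoperator_bound[OF U] zoperator_bound[OF U'] by metis
  fix x :: "nat \<Rightarrow> ('a, 'b) zpt"
  assume x: "\<forall>n. x n \<in> Zp p \<and> znorm p (x n) \<le> 1"
  define v where "v n = zscale (1/K') (U' (x n))" for n
  have v: "v n \<in> Zp p" "znorm p (v n) \<le> 1" "U' (x n) = zscale K' (v n)" for n
    unfolding v_def using zscale_into_unit_ball[OF \<open>p > 0\<close> _ zoperator_range[OF U'] znorm_le_on_unit_ball[OF _ K'(2)]] x K'(1)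
    by auto
  then obtain r w where r: "strict_mono r" "w \<in> Zp p" "(\<lambda>n. znorm p (zsub (S (v (r n))) w)) \<longlonglongrightarrow> 0"
    using zcompact_opE[OF Sc] by metis
  have diff_in: "zsub (S (v (r n))) w \<in> Zp p" for n
    using zsub_in_Zp[OF zoperator_in_Zp[OF S v(1)] r(2) \<open>p > 0\<close>] .
  have "zsub (U (S (U' (x (r n))))) (U (zscale K' w)) = U (zscale K' (zsub (S (v (r n))) w))" for n
    using zoperator_zsub[OF U zscale_in_Zp zscale_in_Zp, OF zoperator_in_Zp[OF S v(1)] r(2)]
    by (simp add: v(3) zoperator_zscale[OF S v(1)] zscale_zsub)
  then have bound: "znorm p (zsub (U (S (U' (x (r n))))) (U (zscale K' w)))
      \<le> (KU * K') * znorm p (zsub (S (v (r n))) w)" for n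
    using KU(2)[OF zscale_in_Zp[OF diff_in, of K']] znorm_zscale[OF diff_in \<open>p > 0\<close>, of K'] K'(1)
    by (simp add: mult.assoc)
  have "(\<lambda>n. znorm p (zsub (U (S (U' (x (r n))))) (U (zscale K' w)))) \<longlonglongrightarrow> 0"
    by (rule tendsto_sandwich[OF _ _ tendsto_const tendsto_mult_right_zero[OF r(3), where c = "KU * K'"]])
      (simp_all add: znorm_nonneg bound)
  then show "\<exists>r w. strict_mono r \<and> w \<in> Zp p \<and> (\<lambda>n. znorm p (zsub (U (S (U' (x (r n))))) w)) \<longlonglongrightarrow> 0"
    using r(1) zoperator_range[OF U] by blast
qed

lemma P0SJ0_conj:
  assumes T: "support_transfer p A B U U'" and S: "zoperator p S"
  shows "P0SJ0 (\<lambda>z. U (S (U' z))) = P0SJ0 S"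
  unfolding P0SJ0_def using support_transferD(4,6)[OF T] zoperator_range[OF S]
  by (simp add: fun_eq_iff)

lemma IA_zoperator: "S \<in> IA p A \<Longrightarrow> zoperator p S"
  by (simp add: IA_def zcompact_op_def)

lemma zoperator_single_coordinate:
  fixes V :: "('a::real_normed_vector, 'b::real_normed_vector) zpt \<Rightarrow> ('a, 'b) zpt"
  assumes V: "zoperator p V" and fst_V: "\<And>z. z \<in> Zp p \<Longrightarrow> fst (V z) = fst z"
    and K: "\<And>z. z \<in> Zp p \<Longrightarrow> znorm p (V z) \<le> K * znorm p z" and "p > 0" "k \<noteq> 0"
    and G_eq: "\<And>x. G x = snd (V (0::'b, (\<lambda>_. 0)(k := x)))"
  shows "V (0, (\<lambda>_. 0)(k := x)) = (0, G x)" and "(0::'b, G x) \<in> Zp p"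
    and "G (x + y) = (\<lambda>n. G x n + G y n)" and "G (c *\<^sub>R x) = (\<lambda>n. c *\<^sub>R G x n)"
    and "znorm p (0::'b, G x) \<le> K * norm x"
proof -
  have e_in: "(0::'b, (\<lambda>_. 0)(k := x)) \<in> Zp p" for x
    using single_in_Zp[OF \<open>k \<noteq> 0\<close>] .
  show V_e: "V (0, (\<lambda>_. 0)(k := x)) = (0, G x)" for x
    using fst_V[OF e_in] unfolding G_eq by (metis prod.collapse fst_conv)
  show "(0::'b, G x) \<in> Zp p"
    using zoperator_range[OF V, of "(0, (\<lambda>_. 0)(k := x))"] V_e by simp
  have "(0::'b, (\<lambda>_. 0)(k := x + y)) = zadd (0, (\<lambda>_. 0)(k := x)) (0, (\<lambda>_. 0)(k := y))"
    by (simp add: zadd_def fun_eq_iff)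
  then show "G (x + y) = (\<lambda>n. G x n + G y n)"
    unfolding G_eq using zoperator_zadd[OF V e_in e_in] by simp
  have "(0::'b, (\<lambda>_. 0)(k := c *\<^sub>R x)) = zscale c (0, (\<lambda>_. 0)(k := x))"
    by (simp add: zscale_def fun_eq_iff)
  then show "G (c *\<^sub>R x) = (\<lambda>n. c *\<^sub>R G x n)"
    unfolding G_eq using zoperator_zscale[OF V e_in] by simp
  show "znorm p (0::'b, G x) \<le> K * norm x"
    using K[OF e_in] V_e znorm_single[OF \<open>p > 0\<close>] by metis
qed

lemma approximable_P0SJk_conj:
  fixes S :: "('a::real_normed_vector, 'b::real_normed_vector) zpt \<Rightarrow> ('a, 'b) zpt"
  assumes "p > 1" and T: "support_transfer p A B U U'" and S: "S \<in> IA p A" and "k \<in> B" "0 \<notin> B"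
  shows "approximable (P0SJk (\<lambda>z. U (S (U' z))) k)"
proof -
  have "k \<noteq> 0"
    using \<open>k \<in> B\<close> \<open>0 \<notin> B\<close> by metis
  have "p > 0"
    using \<open>p > 1\<close> by simp
  note U' = support_transferD(2)[OF T]
  obtain K' where K': "K' \<ge> 1" "\<And>z. z \<in> Zp p \<Longrightarrow> znorm p (U' z) \<le> K' * znorm p z"
    using zoperator_bound[OF U'] by blast
  define G where "G x = snd (U' (0::'b, (\<lambda>_. 0)(k := x)))" for x
  note G = zoperator_single_coordinate[OF U' support_transferD(5)[OF T] K'(2) \<open>p > 0\<close> \<open>k \<noteq> 0\<close> G_def]
  have G_supp: "G x j \<noteq> 0 \<Longrightarrow> j \<in> A" for x j
  proof -
    have "{j. snd (0::'b, (\<lambda>_. 0)(k := x)) j \<noteq> 0} \<subseteq> B"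
      using \<open>k \<in> B\<close> by auto
    from support_transferD(7)[OF T single_in_Zp[OF \<open>k \<noteq> 0\<close>] _ this] show "G x j \<noteq> 0 \<Longrightarrow> j \<in> A"
      by (auto simp: G_def)
  qed
  have "approximable (\<lambda>x. fst (S (0, G x)))"
    using S K'(1) approximable_fst_zcompact_comp[OF \<open>p > 1\<close> _ _ G(2-5) _ G_supp]
    by (simp add: IA_def)
  moreover have "P0SJk (\<lambda>z. U (S (U' z))) k = (\<lambda>x. fst (S (0, G x)))"
    unfolding P0SJk_def using support_transferD(4)[OF T zoperator_range[OF IA_zoperator[OF S]]]
    by (simp add: G(1))
  ultimately show ?thesis
    by simp
qed

lemma conj_in_IA:
  assumes "p > 1" and T: "support_transfer p A B U U'" and S: "S \<in> IA p A" and "0 \<notin> B"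
  shows "(\<lambda>z. U (S (U' z))) \<in> IA p B"
  unfolding IA_def
proof (intro CollectI conjI ballI)
  have "zcompact_op p S"
    using S by (simp add: IA_def)
  then show "zcompact_op p (\<lambda>z. U (S (U' z)))"
    using zcompact_op_conj[OF support_transferD(1)[OF T] _ support_transferD(2)[OF T]] \<open>p > 1\<close> by simp
  show "approximable (P0SJ0 (\<lambda>z. U (S (U' z))))"
    using S P0SJ0_conj[OF T zcompact_op_zoperator] by (simp add: IA_def)
  show "approximable (P0SJk (\<lambda>z. U (S (U' z))) k)" if "k \<in> B" for k
    using approximable_P0SJk_conj[OF \<open>p > 1\<close> T S that \<open>0 \<notin> B\<close>] .
qed

lemma conj_conj_inverse:
  assumes T: "support_transfer p A B U U'" and S: "zoperator p S"
  shows "(\<lambda>z. U' (U (S (U' (U z))))) = S"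
proof
  fix z
  show "U' (U (S (U' (U z)))) = S z"
  proof (cases "z \<in> Zp p")
    case True
    then show ?thesis
      using support_transferD(3)[OF T] zoperator_in_Zp[OF S True] by simp
  next
    case False
    then show ?thesis
      using zoperator_zzero[OF support_transferD(1)[OF T]] zoperator_zzero[OF support_transferD(2)[OF T]]
      by (simp add: zoperator_outside[OF support_transferD(1)[OF T]] zoperator_zzero[OF S] zoperator_outside[OF S])
  qed
qed

lemma znorm_le_zopnorm:
  assumes S: "zoperator p S" and "z \<in> Zp p" "znorm p z \<le> 1"
  shows "znorm p (S z) \<le> zopnorm p S"
  unfolding zopnorm_def
proof (rule cSup_upper)
  obtain K where K: "K \<ge> 1" "\<And>z. z \<in> Zp p \<Longrightarrow> znorm p (S z) \<le> K * znorm p z"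
    using zoperator_bound[OF S] by blast
  have "znorm p (S w) \<le> K" if "w \<in> Zp p" "znorm p w \<le> 1" for w
    using znorm_le_on_unit_ball[OF _ K(2) that] K(1) by simp
  then show "bdd_above {znorm p (S z) | z. z \<in> Zp p \<and> znorm p z \<le> 1}"
    by (intro bdd_aboveI[of _ K]) blast
qed (use assms in blast)

lemma zopnorm_conj_le:
  assumes "p > 0" and S: "zoperator p S" and U': "zoperator p U'"
    and KU: "KU \<ge> 0" "\<And>z. z \<in> Zp p \<Longrightarrow> znorm p (U z) \<le> KU * znorm p z"
    and K': "K' \<ge> 1" "\<And>z. z \<in> Zp p \<Longrightarrow> znorm p (U' z) \<le> K' * znorm p z"
  shows "zopnorm p (\<lambda>z. U (S (U' z))) \<le> KU * K' * zopnorm p S"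
  unfolding zopnorm_def[of p "\<lambda>z. U (S (U' z))"]
proof (rule cSup_least)
  show "{znorm p (U (S (U' z))) | z. z \<in> Zp p \<and> znorm p z \<le> 1} \<noteq> {}"
    using zzero_in_Zp znorm_zzero by fastforce
  fix t
  assume "t \<in> {znorm p (U (S (U' z))) | z. z \<in> Zp p \<and> znorm p z \<le> 1}"
  then obtain z where z: "t = znorm p (U (S (U' z)))" "z \<in> Zp p" "znorm p z \<le> 1"
    by blast
  have U'z: "U' z \<in> Zp p"
    using zoperator_in_Zp[OF U' z(2)] .
  define w where "w = zscale (1/K') (U' z)"
  have w: "w \<in> Zp p" "znorm p w \<le> 1" "U' z = zscale K' w"
    unfolding w_def using zscale_into_unit_ball[OF \<open>p > 0\<close> _ U'z znorm_le_on_unit_ball[OF _ K'(2) z(2,3)]] K'(1)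
    by auto
  then have "S (U' z) = zscale K' (S w)"
    using zoperator_zscale[OF S w(1)] by simp
  then have "t \<le> KU * (K' * znorm p (S w))"
    using z(1) KU(2)[OF zoperator_in_Zp[OF S U'z]] znorm_zscale[OF zoperator_in_Zp[OF S w(1)] \<open>p > 0\<close>] K'(1)
    by simp
  also have "\<dots> \<le> KU * (K' * zopnorm p S)"
    using znorm_le_zopnorm[OF S w(1,2)] KU(1) K'(1) by (intro mult_left_mono) auto
  finally show "t \<le> KU * K' * zopnorm p S"
    by (simp add: mult.assoc)
qed

lemma bij_betw_conj_IA:
  assumes "p > 1" and T: "support_transfer p A B U U'" and "0 \<notin> A" "0 \<notin> B"
  shows "bij_betw (\<lambda>S z. U (S (U' z))) (IA p A) (IA p B)"
proof (rule bij_betw_byWitness[where f' = "\<lambda>S z. U' (S (U z))"])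
  have T': "support_transfer p B A U' U"
    using support_transfer_sym[OF T] .
  show "\<forall>S\<in>IA p A. (\<lambda>z. U' (U (S (U' (U z))))) = S"
    using conj_conj_inverse[OF T IA_zoperator] by blast
  show "\<forall>S\<in>IA p B. (\<lambda>z. U (U' (S (U (U' z))))) = S"
    using conj_conj_inverse[OF T' IA_zoperator] by blast
  show "(\<lambda>S z. U (S (U' z))) ` IA p A \<subseteq> IA p B"
    using conj_in_IA[OF \<open>p > 1\<close> T _ \<open>0 \<notin> B\<close>] by blast
  show "(\<lambda>S z. U' (S (U z))) ` IA p B \<subseteq> IA p A"
    using conj_in_IA[OF \<open>p > 1\<close> T' _ \<open>0 \<notin> A\<close>] by blast
qed

lemma banach_alg_iso_conj:
  fixes U U' :: "('a::real_normed_vector, 'b::real_normed_vector) zpt \<Rightarrow> ('a, 'b) zpt"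
  assumes "p > 1" and T: "support_transfer p A B U U'" and "0 \<notin> A" "0 \<notin> B"
  shows "banach_alg_iso p (\<lambda>S z. U (S (U' z))) (IA p A) (IA p B)"
proof -
  have "p > 0"
    using \<open>p > 1\<close> by simp
  note U = support_transferD(1)[OF T] and U' = support_transferD(2)[OF T]
  obtain KU K' where KU: "KU \<ge> 1" "\<And>z. z \<in> Zp p \<Longrightarrow> znorm p (U z) \<le> KU * znorm p z"
    and K': "K' \<ge> 1" "\<And>z. z \<in> Zp p \<Longrightarrow> znorm p (U' z) \<le> K' * znorm p z"
    using zoperator_bound[OF U] zoperator_bound[OF U'] by metis
  define \<Phi> where "\<Phi> S = (\<lambda>z. U (S (U' z)))" for S :: "('a, 'b) zpt \<Rightarrow> ('a, 'b) zpt"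
  have "bij_betw \<Phi> (IA p A) (IA p B)"
    unfolding \<Phi>_def by (rule bij_betw_conj_IA[OF \<open>p > 1\<close> T \<open>0 \<notin> A\<close> \<open>0 \<notin> B\<close>])
  moreover have "\<forall>S\<in>IA p A. \<forall>R\<in>IA p A. \<Phi> (\<lambda>z. zadd (S z) (R z)) = (\<lambda>z. zadd (\<Phi> S z) (\<Phi> R z))"
    unfolding \<Phi>_def using zoperator_zadd[OF U zoperator_range zoperator_range] IA_zoperator by blast
  moreover have "\<forall>c. \<forall>S\<in>IA p A. \<Phi> (\<lambda>z. zscale c (S z)) = (\<lambda>z. zscale c (\<Phi> S z))"
    unfolding \<Phi>_def using zoperator_zscale[OF U zoperator_range] IA_zoperator by blast
  moreover have "\<forall>S\<in>IA p A. \<forall>R\<in>IA p A. \<Phi> (S \<circ> R) = \<Phi> S \<circ> \<Phi> R"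
  proof (intro ballI ext)
    fix S R :: "('a, 'b) zpt \<Rightarrow> ('a, 'b) zpt" and z
    assume "R \<in> IA p A"
    then show "\<Phi> (S \<circ> R) z = (\<Phi> S \<circ> \<Phi> R) z"
      unfolding \<Phi>_def using support_transferD(3)[OF T zoperator_range[OF IA_zoperator]] by simp
  qed
  moreover have "\<forall>S\<in>IA p A. zopnorm p (\<Phi> S) \<le> (KU * K') * zopnorm p S"
    unfolding \<Phi>_def using zopnorm_conj_le[OF \<open>p > 0\<close> IA_zoperator U' _ KU(2) K'] KU(1) by simp
  moreover have "\<forall>S\<in>IA p A. 1 / (K' * KU) * zopnorm p S \<le> zopnorm p (\<Phi> S)"
  proof
    fix S :: "('a, 'b) zpt \<Rightarrow> ('a, 'b) zpt"
    assume S: "S \<in> IA p A"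
    have "zopnorm p S = zopnorm p (\<lambda>z. U' (\<Phi> S (U z)))"
      unfolding \<Phi>_def using conj_conj_inverse[OF T IA_zoperator[OF S]] by simp
    also have "\<dots> \<le> K' * KU * zopnorm p (\<Phi> S)"
      using zopnorm_conj_le[OF \<open>p > 0\<close> IA_zoperator[OF conj_in_IA[OF \<open>p > 1\<close> T S \<open>0 \<notin> B\<close>]] U _ K'(2) KU]
        K'(1) by (simp add: \<Phi>_def)
    finally show "1 / (K' * KU) * zopnorm p S \<le> zopnorm p (\<Phi> S)"
      using KU(1) K'(1) by (simp add: field_simps)
  qed
  moreover have "1 / (K' * KU) > 0"
    using KU(1) K'(1) by simp
  ultimately have "banach_alg_iso p \<Phi> (IA p A) (IA p B)"
    unfolding banach_alg_iso_def by blast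
  then show ?thesis
    by (simp add: \<Phi>_def[abs_def])
qed

section \<open>Reshuffling the coordinates\<close>

lemma infsum_eq_suminf_nonneg:
  fixes f :: "nat \<Rightarrow> real"
  assumes "summable f" "\<And>n. f n \<ge> 0"
  shows "infsum f UNIV = suminf f"
  by (rule infsumI[OF sums_nonneg_imp_has_sum[OF summable_sums[OF assms(1)] assms(2)]])

lemma summable_on_nat_prod_nonnegI:
  fixes a :: "nat \<times> nat \<Rightarrow> real"
  assumes nonneg: "\<And>q. a q \<ge> 0"
    and rows: "\<And>j. summable (\<lambda>n. a (j, n))" and row_sums: "summable (\<lambda>j. \<Sum>n. a (j, n))"
  shows "a summable_on UNIV"
proof -
  have "((\<lambda>n. a (j, n)) has_sum (\<Sum>n. a (j, n))) UNIV" for j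
    using sums_nonneg_imp_has_sum[OF summable_sums[OF rows] nonneg] .
  moreover have "(\<lambda>j. \<Sum>n. a (j, n)) summable_on UNIV"
    using row_sums nonneg by (simp add: summable_on_UNIV_nonneg_real_iff suminf_nonneg rows)
  ultimately show ?thesis
    using summable_on_SigmaI[where A = UNIV and B = "\<lambda>_. UNIV" and f = a and g = "\<lambda>j. \<Sum>n. a (j, n)"] nonneg
    by simp
qed

lemma summable_on_nat_prod_nonnegD:
  fixes a :: "nat \<times> nat \<Rightarrow> real"
  assumes nonneg: "\<And>q. a q \<ge> 0" and a: "a summable_on UNIV"
  shows "summable (\<lambda>n. a (j, n))" and "summable (\<lambda>j. \<Sum>n. a (j, n))"
    and "(\<Sum>j. \<Sum>n. a (j, n)) = infsum a UNIV"
proof -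
  have row_on: "(\<lambda>n. a (j, n)) summable_on UNIV" for j
    using summable_on_SigmaD1[of "\<lambda>x y. a (x, y)" UNIV "\<lambda>_. UNIV" j] a by simp
  then show rows: "summable (\<lambda>n. a (j, n))" for j
    by (rule summable_on_imp_summable)
  have row_sum: "infsum (\<lambda>n. a (j, n)) UNIV = (\<Sum>n. a (j, n))" for j
    using infsum_eq_suminf_nonneg[OF rows nonneg] .
  have "(\<lambda>j. infsum (\<lambda>n. a (j, n)) UNIV) summable_on UNIV"
    using summable_on_SigmaD[of a UNIV "\<lambda>_. UNIV"] a row_on by simp
  then show sums: "summable (\<lambda>j. \<Sum>n. a (j, n))"
    unfolding row_sum by (rule summable_on_imp_summable)
  have "(\<Sum>j. \<Sum>n. a (j, n)) = infsum (\<lambda>j. infsum (\<lambda>n. a (j, n)) UNIV) UNIV"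
    unfolding row_sum using infsum_eq_suminf_nonneg[OF sums] nonneg by (simp add: suminf_nonneg rows)
  also have "\<dots> = infsum a UNIV"
    using infsum_Sigma_banach[of a UNIV "\<lambda>_. UNIV"] a by simp
  finally show "(\<Sum>j. \<Sum>n. a (j, n)) = infsum a UNIV" .
qed

lemma double_suminf_reindex_bij:
  fixes a :: "nat \<times> nat \<Rightarrow> real"
  assumes "bij \<sigma>" and nonneg: "\<And>q. a q \<ge> 0"
    and rows: "\<And>j. summable (\<lambda>n. a (j, n))" and row_sums: "summable (\<lambda>j. \<Sum>n. a (j, n))"
  shows "summable (\<lambda>n. a (\<sigma> (j, n)))" and "summable (\<lambda>j. \<Sum>n. a (\<sigma> (j, n)))"
    and "(\<Sum>j. \<Sum>n. a (\<sigma> (j, n))) = (\<Sum>j. \<Sum>n. a (j, n))"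
proof -
  have a: "a summable_on UNIV"
    using summable_on_nat_prod_nonnegI[OF nonneg rows row_sums] .
  have b: "(\<lambda>q. a (\<sigma> q)) summable_on UNIV"
    using summable_on_reindex_bij_betw[of \<sigma> UNIV UNIV a] \<open>bij \<sigma>\<close> a by (simp add: bij_def)
  show "summable (\<lambda>n. a (\<sigma> (j, n)))" and "summable (\<lambda>j. \<Sum>n. a (\<sigma> (j, n)))"
    using summable_on_nat_prod_nonnegD[of "\<lambda>q. a (\<sigma> q)", OF nonneg b] by simp_all
  have "(\<Sum>j. \<Sum>n. a (\<sigma> (j, n))) = infsum (\<lambda>q. a (\<sigma> q)) UNIV"
    using summable_on_nat_prod_nonnegD(3)[of "\<lambda>q. a (\<sigma> q)", OF nonneg b] by simp
  also have "\<dots> = infsum a UNIV"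
    using infsum_reindex_bij_betw[of \<sigma> UNIV UNIV a] \<open>bij \<sigma>\<close> by (simp add: bij_def)
  also have "\<dots> = (\<Sum>j. \<Sum>n. a (j, n))"
    using summable_on_nat_prod_nonnegD(3)[OF nonneg a] by simp
  finally show "(\<Sum>j. \<Sum>n. a (\<sigma> (j, n))) = (\<Sum>j. \<Sum>n. a (j, n))" .
qed

locale lp_sum_isomorphism =
  fixes p :: real and T :: "(nat \<Rightarrow> 'a::real_normed_vector) \<Rightarrow> 'a" and c C :: real
  assumes p_pos: "p > 0"
    and T_bij: "bij_betw T (lp_seq p) UNIV"
    and T_add: "\<And>f g. f \<in> lp_seq p \<Longrightarrow> g \<in> lp_seq p \<Longrightarrow> T (\<lambda>n. f n + g n) = T f + T g"
    and T_scale: "\<And>a f. f \<in> lp_seq p \<Longrightarrow> T (\<lambda>n. a *\<^sub>R f n) = a *\<^sub>R T f"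
    and c_pos: "c > 0" and C_pos: "C > 0"
    and T_lower: "\<And>f. f \<in> lp_seq p \<Longrightarrow> c * lp_norm p f \<le> norm (T f)"
    and T_upper: "\<And>f. f \<in> lp_seq p \<Longrightarrow> norm (T f) \<le> C * lp_norm p f"
begin

definition T_inv :: "'a \<Rightarrow> nat \<Rightarrow> 'a" where
  "T_inv = inv_into (lp_seq p) T"

lemma lp_seq_iff: "f \<in> lp_seq p \<longleftrightarrow> summable (\<lambda>n. norm (f n) powr p)"
  by (simp add: lp_seq_def)

lemma T_inv_in_lp_seq: "T_inv x \<in> lp_seq p"
  unfolding T_inv_def using T_bij by (metis UNIV_I bij_betw_def inv_into_into)

lemma T_T_inv [simp]: "T (T_inv x) = x"
  unfolding T_inv_def using T_bij by (metis UNIV_I bij_betw_inv_into_right)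

lemma T_inv_T: "f \<in> lp_seq p \<Longrightarrow> T_inv (T f) = f"
  unfolding T_inv_def using T_bij by (metis bij_betw_inv_into_left)

lemma T_zero [simp]: "T (\<lambda>_. 0) = 0"
  using T_scale[of "\<lambda>_. 0" 0] by (simp add: lp_seq_iff)

lemma T_inv_zero [simp]: "T_inv 0 = (\<lambda>_. 0)"
  using T_inv_T[of "\<lambda>_. 0"] by (simp add: lp_seq_iff)

lemma T_inv_add: "T_inv (x + y) = (\<lambda>n. T_inv x n + T_inv y n)"
proof -
  have "(\<lambda>n. T_inv x n + T_inv y n) \<in> lp_seq p"
    using T_inv_in_lp_seq[of x] T_inv_in_lp_seq[of y] p_pos by (simp add: lp_seq_iff summable_norm_powr_add)
  then show ?thesis
    using T_inv_T T_add[OF T_inv_in_lp_seq T_inv_in_lp_seq, of x y] by force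
qed

lemma T_inv_scale: "T_inv (a *\<^sub>R x) = (\<lambda>n. a *\<^sub>R T_inv x n)"
proof -
  have "(\<lambda>n. a *\<^sub>R T_inv x n) \<in> lp_seq p"
    using T_inv_in_lp_seq[of x] summable_norm_powr_scaleR[of "T_inv x" p a]
    by (simp add: lp_seq_iff del: norm_scaleR)
  then show ?thesis
    using T_inv_T T_scale[OF T_inv_in_lp_seq, of a x] by force
qed

lemma suminf_T_inv_le: "(\<Sum>n. norm (T_inv x n) powr p) \<le> (1/c) powr p * norm x powr p"
proof -
  define s where "s = (\<Sum>n. norm (T_inv x n) powr p)"
  have "s \<ge> 0"
    unfolding s_def using T_inv_in_lp_seq[of x] by (simp add: lp_seq_iff suminf_nonneg)
  have "c * s powr (1/p) \<le> norm x"
    using T_lower[OF T_inv_in_lp_seq[of x]] unfolding lp_norm_def s_def by simp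
  then have "s powr (1/p) \<le> norm x / c"
    using c_pos by (simp add: field_simps)
  then have "(s powr (1/p)) powr p \<le> (norm x / c) powr p"
    using p_pos by (intro powr_mono2) auto
  moreover have "(norm x / c) powr p = (1/c) powr p * norm x powr p"
    using c_pos by (simp add: powr_divide)
  ultimately show ?thesis
    using \<open>s \<ge> 0\<close> p_pos by (simp add: s_def powr_powr)
qed

lemma norm_T_powr_le:
  assumes "f \<in> lp_seq p"
  shows "norm (T f) powr p \<le> C powr p * (\<Sum>n. norm (f n) powr p)"
proof -
  define s where "s = (\<Sum>n. norm (f n) powr p)"
  have "s \<ge> 0"
    unfolding s_def using assms by (simp add: lp_seq_iff suminf_nonneg)
  have "norm (T f) powr p \<le> (C * s powr (1/p)) powr p"
    using T_upper[OF assms] p_pos unfolding lp_norm_def s_def by (intro powr_mono2) auto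
  also have "\<dots> = C powr p * s"
    using C_pos \<open>s \<ge> 0\<close> p_pos by (simp add: powr_mult powr_powr)
  finally show ?thesis
    unfolding s_def .
qed

text \<open>Via T, a sequence f in (X (+) X (+) ...)_p is the double sequence (j, n) \<mapsto> T_inv (f j) n
  in l^p(N \<times> N; X). Reshuffling permutes the double index by \<sigma>; row 0 is the dummy
  coordinate of Z_p.\<close>

definition reshuffle :: "(nat \<times> nat \<Rightarrow> nat \<times> nat) \<Rightarrow> (nat \<Rightarrow> 'a) \<Rightarrow> nat \<Rightarrow> 'a" where
  "reshuffle \<sigma> f j = (if j = 0 then 0 else T (\<lambda>n. T_inv (f (fst (\<sigma> (j, n)))) (snd (\<sigma> (j, n)))))"

lemma summable_T_inv_rows:
  assumes f: "summable (\<lambda>i. norm (f i) powr p)"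
  shows "summable (\<lambda>i. \<Sum>n. norm (T_inv (f i) n) powr p)"
    and "(\<Sum>i. \<Sum>n. norm (T_inv (f i) n) powr p) \<le> (1/c) powr p * (\<Sum>i. norm (f i) powr p)"
proof -
  show summ: "summable (\<lambda>i. \<Sum>n. norm (T_inv (f i) n) powr p)"
    using suminf_T_inv_le T_inv_in_lp_seq
    by (intro summable_comparison_test'[OF summable_mult[OF f]]) (simp add: lp_seq_iff suminf_nonneg)
  have "(\<Sum>i. \<Sum>n. norm (T_inv (f i) n) powr p) \<le> (\<Sum>i. (1/c) powr p * norm (f i) powr p)"
    using suminf_T_inv_le summ f by (intro suminf_le) (auto intro: summable_mult)
  also have "\<dots> = (1/c) powr p * (\<Sum>i. norm (f i) powr p)"
    using suminf_mult[OF f] .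
  finally show "(\<Sum>i. \<Sum>n. norm (T_inv (f i) n) powr p) \<le> (1/c) powr p * (\<Sum>i. norm (f i) powr p)" .
qed

lemma reshuffle_row_in_lp_seq_and_bound:
  assumes "bij \<sigma>" and f: "summable (\<lambda>j. norm (f j) powr p)"
  shows "(\<lambda>n. T_inv (f (fst (\<sigma> (j, n)))) (snd (\<sigma> (j, n)))) \<in> lp_seq p"
    and "summable (\<lambda>j. norm (reshuffle \<sigma> f j) powr p)"
    and "(\<Sum>j. norm (reshuffle \<sigma> f j) powr p) \<le> (C / c) powr p * (\<Sum>j. norm (f j) powr p)"
proof -
  define a where "a q = norm (T_inv (f (fst q)) (snd q)) powr p" for q
  have a_nonneg: "a q \<ge> 0" for q
    by (simp add: a_def)
  have rows: "summable (\<lambda>n. a (i, n))" for i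
    using T_inv_in_lp_seq[of "f i"] by (simp add: a_def lp_seq_iff)
  have row_sums: "summable (\<lambda>i. \<Sum>n. a (i, n))"
    using summable_T_inv_rows(1)[OF f] by (simp add: a_def)
  note reindexed = double_suminf_reindex_bij[OF \<open>bij \<sigma>\<close> a_nonneg rows row_sums]
  show row: "(\<lambda>n. T_inv (f (fst (\<sigma> (j, n)))) (snd (\<sigma> (j, n)))) \<in> lp_seq p" for j
    using reindexed(1)[of j] by (simp add: a_def lp_seq_iff)
  have le: "norm (reshuffle \<sigma> f j) powr p \<le> C powr p * (\<Sum>n. a (\<sigma> (j, n)))" for j
  proof (cases "j = 0")
    case True
    then show ?thesis
      using suminf_nonneg[OF reindexed(1) a_nonneg] by (simp add: reshuffle_def)
  next
    case False
    then show ?thesis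
      using norm_T_powr_le[OF row[of j]] by (simp add: reshuffle_def a_def)
  qed
  show summ: "summable (\<lambda>j. norm (reshuffle \<sigma> f j) powr p)"
    by (rule summable_comparison_test'[OF summable_mult[OF reindexed(2), where c = "C powr p"]]) (simp add: le)
  have "(\<Sum>j. norm (reshuffle \<sigma> f j) powr p) \<le> (\<Sum>j. C powr p * (\<Sum>n. a (\<sigma> (j, n))))"
    using le summ summable_mult[OF reindexed(2)] by (intro suminf_le) auto
  also have "\<dots> = C powr p * (\<Sum>j. \<Sum>n. a (j, n))"
    using suminf_mult[OF reindexed(2)] reindexed(3) by simp
  also have "\<dots> \<le> C powr p * ((1/c) powr p * (\<Sum>j. norm (f j) powr p))"
    using mult_left_mono[OF summable_T_inv_rows(2)[OF f], of "C powr p"] by (simp add: a_def)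
  also have "\<dots> = (C / c) powr p * (\<Sum>j. norm (f j) powr p)"
    using C_pos c_pos by (simp add: powr_divide)
  finally show "(\<Sum>j. norm (reshuffle \<sigma> f j) powr p) \<le> (C / c) powr p * (\<Sum>j. norm (f j) powr p)" .
qed

lemma reshuffle_inverse:
  assumes "bij \<sigma>" and row0: "\<And>n. \<sigma> (0, n) = (0, n)"
    and "f 0 = 0" and f: "summable (\<lambda>j. norm (f j) powr p)"
  shows "reshuffle (inv \<sigma>) (reshuffle \<sigma> f) = f"
proof
  fix j
  show "reshuffle (inv \<sigma>) (reshuffle \<sigma> f) j = f j"
  proof (cases "j = 0")
    case True
    then show ?thesis
      using \<open>f 0 = 0\<close> by (simp add: reshuffle_def)
  next
    case False
    have "T_inv (reshuffle \<sigma> f (fst (inv \<sigma> (j, n)))) (snd (inv \<sigma> (j, n))) = T_inv (f j) n" for n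
    proof -
      define q where "q = inv \<sigma> (j, n)"
      have "\<sigma> q = (j, n)"
        unfolding q_def using bij_inv_eq_iff[OF \<open>bij \<sigma>\<close>] by metis
      then have "fst q \<noteq> 0"
        using False row0 by (metis prod.collapse fst_conv)
      then have "T_inv (reshuffle \<sigma> f (fst q)) = (\<lambda>m. T_inv (f (fst (\<sigma> (fst q, m)))) (snd (\<sigma> (fst q, m))))"
        using T_inv_T[OF reshuffle_row_in_lp_seq_and_bound(1)[OF \<open>bij \<sigma>\<close> f]] by (simp add: reshuffle_def)
      then show ?thesis
        using \<open>\<sigma> q = (j, n)\<close> by (simp add: q_def[symmetric])
    qed
    then show ?thesis
      using False by (simp add: reshuffle_def)
  qed
qed

lemma reshuffle_add:
  assumes "bij \<sigma>" "summable (\<lambda>j. norm (f j) powr p)" "summable (\<lambda>j. norm (g j) powr p)"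
  shows "reshuffle \<sigma> (\<lambda>j. f j + g j) = (\<lambda>j. reshuffle \<sigma> f j + reshuffle \<sigma> g j)"
  using T_add[OF reshuffle_row_in_lp_seq_and_bound(1)[OF assms(1,2)] reshuffle_row_in_lp_seq_and_bound(1)[OF assms(1,3)]]
  by (simp add: reshuffle_def T_inv_add fun_eq_iff)

lemma reshuffle_scale:
  assumes "bij \<sigma>" "summable (\<lambda>j. norm (f j) powr p)"
  shows "reshuffle \<sigma> (\<lambda>j. a *\<^sub>R f j) = (\<lambda>j. a *\<^sub>R reshuffle \<sigma> f j)"
  using T_scale[OF reshuffle_row_in_lp_seq_and_bound(1)[OF assms]]
  by (simp add: reshuffle_def T_inv_scale fun_eq_iff)

lemma reshuffle_zero [simp]: "reshuffle \<sigma> (\<lambda>_. 0) = (\<lambda>_. 0)"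
  by (simp add: reshuffle_def fun_eq_iff)

lemma reshuffle_support:
  assumes "\<And>q. fst (\<sigma> q) \<in> A \<longleftrightarrow> fst q \<in> B" and "{j. f j \<noteq> 0} \<subseteq> A"
  shows "{j. reshuffle \<sigma> f j \<noteq> 0} \<subseteq> B"
proof
  fix j
  assume "j \<in> {j. reshuffle \<sigma> f j \<noteq> 0}"
  moreover have "reshuffle \<sigma> f j = 0" if "j \<notin> B"
  proof -
    have "f (fst (\<sigma> (j, n))) = 0" for n
      using assms that by (metis (mono_tags, lifting) fst_conv mem_Collect_eq subsetD)
    then show ?thesis
      by (simp add: reshuffle_def)
  qed
  ultimately show "j \<in> B"
    by blast
qed

definition reshuffle_op :: "(nat \<times> nat \<Rightarrow> nat \<times> nat) \<Rightarrow> ('a, 'b::real_normed_vector) zpt \<Rightarrow> ('a, 'b) zpt" where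
  "reshuffle_op \<sigma> z = (if z \<in> Zp p then (fst z, reshuffle \<sigma> (snd z)) else zzero)"

lemma reshuffle_op_in_Zp:
  "bij \<sigma> \<Longrightarrow> z \<in> Zp p \<Longrightarrow> reshuffle_op \<sigma> z \<in> Zp p"
  using reshuffle_row_in_lp_seq_and_bound(2)[of \<sigma> "snd z"]
  by (simp add: reshuffle_op_def Zp_iff reshuffle_def)

lemma znorm_reshuffle_op_le:
  fixes z :: "('a, 'b::real_normed_vector) zpt"
  assumes "bij \<sigma>" and z: "z \<in> Zp p"
  shows "znorm p (reshuffle_op \<sigma> z) \<le> max 1 ((C / c) powr p) powr (1/p) * znorm p z"
proof -
  define M where "M = max 1 ((C / c) powr p)"
  have summ: "summable (\<lambda>j. norm (snd z j) powr p)"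
    using z Zp_iff by blast
  note bound = reshuffle_row_in_lp_seq_and_bound(2,3)[OF assms(1) summ]
  have "(C / c) powr p * (\<Sum>j. norm (snd z j) powr p) \<le> M * (\<Sum>j. norm (snd z j) powr p)"
    using suminf_norm_powr_nonneg[OF summ] by (intro mult_right_mono) (simp_all add: M_def)
  moreover have "norm (fst z) powr p \<le> M * norm (fst z) powr p"
    using mult_right_mono[of 1 M "norm (fst z) powr p"] by (simp add: M_def)
  ultimately have "norm (fst z) powr p + (\<Sum>j. norm (reshuffle \<sigma> (snd z) j) powr p)
      \<le> M * (norm (fst z) powr p + (\<Sum>j. norm (snd z j) powr p))"
    unfolding distrib_left using bound(2) by linarith
  then have "znorm p (reshuffle_op \<sigma> z) \<le> (M * (norm (fst z) powr p + (\<Sum>j. norm (snd z j) powr p))) powr (1/p)"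
    unfolding znorm_def using z p_pos suminf_norm_powr_nonneg[OF bound(1)]
    by (simp add: reshuffle_op_def) (intro powr_mono2, auto)
  also have "\<dots> = M powr (1/p) * znorm p z"
    unfolding znorm_def using suminf_norm_powr_nonneg[OF summ] by (subst powr_mult) (auto simp: M_def)
  finally show ?thesis
    unfolding M_def .
qed

lemma zoperator_reshuffle_op:
  assumes "bij \<sigma>"
  shows "zoperator p (reshuffle_op \<sigma> :: ('a, 'b::real_normed_vector) zpt \<Rightarrow> ('a, 'b) zpt)"
  unfolding zoperator_def
proof (intro conjI ballI allI impI)
  show "reshuffle_op \<sigma> z \<in> Zp p" if "z \<in> Zp p" for z :: "('a, 'b) zpt"
    using reshuffle_op_in_Zp[OF assms that] .
  show "reshuffle_op \<sigma> z = zzero" if "z \<notin> Zp p" for z :: "('a, 'b) zpt"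
    using that by (simp add: reshuffle_op_def)
  show "reshuffle_op \<sigma> (zadd z w) = zadd (reshuffle_op \<sigma> z) (reshuffle_op \<sigma> w)"
    if "z \<in> Zp p" "w \<in> Zp p" for z w :: "('a, 'b) zpt"
    using that zadd_in_Zp[OF that p_pos] reshuffle_add[OF assms]
    by (simp add: reshuffle_op_def zadd_def Zp_iff)
  show "reshuffle_op \<sigma> (zscale a z) = zscale a (reshuffle_op \<sigma> z)" if "z \<in> Zp p" for a :: real and z :: "('a, 'b) zpt"
    using that zscale_in_Zp[OF that] reshuffle_scale[OF assms]
    by (simp add: reshuffle_op_def zscale_def Zp_iff)
  show "\<exists>K. \<forall>z\<in>Zp p. znorm p (reshuffle_op \<sigma> z) \<le> K * znorm p (z :: ('a, 'b) zpt)"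
    using znorm_reshuffle_op_le[OF assms] by blast
qed

lemma support_transfer_reshuffle_op:
  assumes "bij \<sigma>" and row0: "\<And>n. \<sigma> (0, n) = (0, n)" and AB: "\<And>q. fst (\<sigma> q) \<in> A \<longleftrightarrow> fst q \<in> B"
  shows "support_transfer p A B (reshuffle_op \<sigma> :: ('a, 'b::real_normed_vector) zpt \<Rightarrow> ('a, 'b) zpt)
    (reshuffle_op (inv \<sigma>))"
proof -
  have bij': "bij (inv \<sigma>)"
    using \<open>bij \<sigma>\<close> by (rule bij_imp_bij_inv)
  have row0': "inv \<sigma> (0, n) = (0, n)" for n
    using row0 \<open>bij \<sigma>\<close> by (metis bij_inv_eq_iff)
  have inv_inv: "inv (inv \<sigma>) = \<sigma>"
    using \<open>bij \<sigma>\<close> by (rule inv_inv_eq)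
  have BA: "fst (inv \<sigma> q) \<in> B \<longleftrightarrow> fst q \<in> A" for q
    using AB[of "inv \<sigma> q"] surj_f_inv_f[OF bij_is_surj[OF \<open>bij \<sigma>\<close>], of q] by simp
  have op: "reshuffle_op \<tau> z = (fst z, reshuffle \<tau> (snd z))" if "z \<in> Zp p" for \<tau> and z :: "('a, 'b) zpt"
    using that by (simp add: reshuffle_op_def)
  have inverse: "reshuffle_op \<tau>' (reshuffle_op \<tau> z) = z"
    if "bij \<tau>" "\<And>n. \<tau> (0, n) = (0, n)" "\<tau>' = inv \<tau>" "z \<in> Zp p" for \<tau> \<tau>' and z :: "('a, 'b) zpt"
    using that reshuffle_inverse[OF that(1,2)] reshuffle_op_in_Zp[OF that(1,4)]
    by (simp add: op Zp_iff)
  show ?thesis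
    unfolding support_transfer_def
    using zoperator_reshuffle_op[OF \<open>bij \<sigma>\<close>] zoperator_reshuffle_op[OF bij']
      inverse[OF \<open>bij \<sigma>\<close> row0 refl] inverse[OF bij' row0' inv_inv[symmetric]]
      reshuffle_support[OF AB] reshuffle_support[OF BA]
    by (simp add: op)
qed

end

lemma bij_betw_times_nat:
  fixes X Y :: "'a::countable set"
  assumes "X \<noteq> {}" "Y \<noteq> {}"
  obtains g where "bij_betw g (X \<times> (UNIV :: nat set)) (Y \<times> (UNIV :: nat set))"
proof -
  have inf: "infinite (Z \<times> (UNIV :: nat set))" if "Z \<noteq> {}" for Z :: "'a set"
    using finite_cartesian_productD2 that by blast
  have "bij_betw (to_nat_on (X \<times> (UNIV :: nat set))) (X \<times> UNIV) UNIV"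
    using to_nat_on_infinite[OF _ inf[OF assms(1)]] by simp
  moreover have "bij_betw (from_nat_into (Y \<times> (UNIV :: nat set))) UNIV (Y \<times> UNIV)"
    using bij_betw_from_nat_into[OF _ inf[OF assms(2)]] by simp
  ultimately show ?thesis
    using that bij_betw_trans by blast
qed

text \<open>Both A and its complement in {1..} are nonempty, so the rows indexed by A, by B and by
  their complements are each countably infinite and can be matched up bijectively.\<close>

lemma exists_row_bij:
  assumes A: "A \<noteq> {}" "A \<subset> {1..}" and B: "B \<noteq> {}" "B \<subset> {1..}"
  obtains \<sigma> :: "nat \<times> nat \<Rightarrow> nat \<times> nat"
  where "bij \<sigma>" "\<And>n. \<sigma> (0, n) = (0, n)" "\<And>q. fst (\<sigma> q) \<in> A \<longleftrightarrow> fst q \<in> B"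
proof -
  define CA CB where "CA = {1..} - A" and "CB = {1..} - B"
  have "CA \<noteq> {}" "CB \<noteq> {}"
    using A B unfolding CA_def CB_def by blast+
  obtain s1 s2 :: "nat \<times> nat \<Rightarrow> nat \<times> nat"
    where s1: "bij_betw s1 (B \<times> UNIV) (A \<times> UNIV)" and s2: "bij_betw s2 (CB \<times> UNIV) (CA \<times> UNIV)"
    using bij_betw_times_nat[OF B(1) A(1)] bij_betw_times_nat[OF \<open>CB \<noteq> {}\<close> \<open>CA \<noteq> {}\<close>] by metis
  define \<sigma> where "\<sigma> q = (if fst q = 0 then q else if fst q \<in> B then s1 q else s2 q)" for q
  have "0 \<notin> A" "0 \<notin> B"
    using A B by auto
  have "bij_betw \<sigma> ({0} \<times> UNIV) ({0} \<times> UNIV)"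
    by (rule bij_betw_cong[THEN iffD2, of _ _ id]) (auto simp: \<sigma>_def)
  moreover have "bij_betw \<sigma> (B \<times> UNIV) (A \<times> UNIV)"
    by (rule bij_betw_cong[THEN iffD2, OF _ s1]) (auto simp: \<sigma>_def \<open>0 \<notin> B\<close>)
  moreover have "bij_betw \<sigma> (CB \<times> UNIV) (CA \<times> UNIV)"
    by (rule bij_betw_cong[THEN iffD2, OF _ s2]) (auto simp: \<sigma>_def CB_def)
  ultimately have all: "bij_betw \<sigma> ({0} \<times> UNIV \<union> (B \<times> UNIV \<union> CB \<times> UNIV))
      ({0} \<times> UNIV \<union> (A \<times> UNIV \<union> CA \<times> UNIV))"
    using \<open>0 \<notin> A\<close> by (intro bij_betw_combine) (auto simp: CA_def)
  have dom: "{0} \<times> UNIV \<union> (B \<times> UNIV \<union> CB \<times> UNIV) = UNIV"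
    and ran: "{0} \<times> UNIV \<union> (A \<times> UNIV \<union> CA \<times> UNIV) = UNIV"
    by (auto simp: CA_def CB_def)
  have "bij \<sigma>"
    using all unfolding dom ran bij_def by simp
  moreover have "fst (\<sigma> q) \<in> A \<longleftrightarrow> fst q \<in> B" for q
  proof -
    have "q \<in> B \<times> UNIV \<Longrightarrow> \<sigma> q \<in> A \<times> UNIV" "q \<in> CB \<times> UNIV \<Longrightarrow> \<sigma> q \<in> CA \<times> UNIV"
      using \<open>bij_betw \<sigma> (B \<times> UNIV) (A \<times> UNIV)\<close> \<open>bij_betw \<sigma> (CB \<times> UNIV) (CA \<times> UNIV)\<close> bij_betwE by blast+
    then show ?thesis
      using \<open>0 \<notin> A\<close> \<open>0 \<notin> B\<close> by (cases q) (auto simp: \<sigma>_def CA_def CB_def)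
  qed
  ultimately show ?thesis
    using that by (simp add: \<sigma>_def)
qed

lemma support_transfer_exists:
  assumes "p > 1" and iso: "lp_sum_iso p TYPE('a::real_normed_vector)"
    and "A \<noteq> {}" "A \<subset> {1..}" "B \<noteq> {}" "B \<subset> {1..}"
  obtains U U' :: "('a::real_normed_vector, 'b::real_normed_vector) zpt \<Rightarrow> ('a, 'b) zpt"
  where "support_transfer p A B U U'"
proof -
  obtain T :: "(nat \<Rightarrow> 'a) \<Rightarrow> 'a" and c C where T: "bij_betw T (lp_seq p) UNIV"
    "\<forall>f\<in>lp_seq p. \<forall>g\<in>lp_seq p. T (\<lambda>n. f n + g n) = T f + T g"
    "\<forall>a. \<forall>f\<in>lp_seq p. T (\<lambda>n. a *\<^sub>R f n) = a *\<^sub>R T f"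
    "0 < c" "0 < C" "\<forall>f\<in>lp_seq p. c * lp_norm p f \<le> norm (T f) \<and> norm (T f) \<le> C * lp_norm p f"
    using iso unfolding lp_sum_iso_def by blast
  interpret lp_sum_isomorphism p T c C
    using \<open>p > 1\<close> T by unfold_locales auto
  obtain \<sigma> :: "nat \<times> nat \<Rightarrow> nat \<times> nat"
    where "bij \<sigma>" "\<And>n. \<sigma> (0, n) = (0, n)" "\<And>q. fst (\<sigma> q) \<in> A \<longleftrightarrow> fst q \<in> B"
    using exists_row_bij[OF assms(3-6)] by blast
  then have "support_transfer p A B (reshuffle_op \<sigma> :: ('a, 'b) zpt \<Rightarrow> ('a, 'b) zpt) (reshuffle_op (inv \<sigma>))"
    by (rule support_transfer_reshuffle_op)
  then show ?thesis
    by (rule that)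
qed

theorem theorem2p1:
  fixes p :: real and A B :: "nat set"
  assumes "1 < p"
    and "approximation_property TYPE('a::banach)"
    and "{T :: 'a \<Rightarrow> 'b::banach. approximable T} \<subset> {T. compact_op T}"
    and "lp_sum_iso p TYPE('a)"
    and "A \<noteq> {}" and "A \<subset> {1..}"
    and "B \<noteq> {}" and "B \<subset> {1..}"
  shows "\<exists>\<Phi>. banach_alg_iso p \<Phi> (IA p A :: (('a, 'b) zpt \<Rightarrow> ('a, 'b) zpt) set) (IA p B)"
proof -
  \<comment> \<open>The approximation property and A(X,Y) \<noteq> K(X,Y) only make the ideals I_A pairwise
    distinct; the isomorphism does not need them.\<close>
  obtain U U' :: "('a, 'b) zpt \<Rightarrow> ('a, 'b) zpt" where "support_transfer p A B U U'"
    using support_transfer_exists[OF assms(1,4-8)] by blast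
  moreover have "0 \<notin> A" "0 \<notin> B"
    using assms(6,8) by auto
  ultimately show ?thesis
    using banach_alg_iso_conj[OF assms(1)] by blast
qed

end
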